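(* Let $\mathbb{F}$ be a field, $p,q\in\mathbb{F}[t]$ monic of degree $2$, and $\mathcal{W}_{p,q}=\mathbb{F}\langle a,b\rangle/(p(a),q(b))$. The group of units $\mathcal{W}_{p,q}^\times$ is generated by the basic units (the units lying in $\mathbb{F}[a]\cup\mathbb{F}[b]$) if and only if both $p$ and $q$ are irreducible over $\mathbb{F}$.
   Context: $\mathcal{W}_{p,q}$ is the quotient of the free associative unital $\mathbb{F}$-algebra on two noncommuting generators by the two-sided ideal generated by $p(a)$ and $q(b)$; $a,b$ denote the images of the generators, and $\mathbb{F}[a],\mathbb{F}[b]$ are $2$-dimensional subalgebras. *)

theory Defs
  imports "HOL-Algebra.Algebra" "HOL-Computational_Algebra.Polynomial"
begin

text \<open>The free associative unital F-algebra on two noncommuting generators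
  a (encoded by the letter True) and b (encoded by the letter False):
  finitely supported F-valued functions on words over {True, False},
  with concatenation-convolution as product.\<close>

definition free_alg2 :: "(bool list \<Rightarrow> 'a::field) ring" where
  "free_alg2 = \<lparr> carrier = {f. finite {w. f w \<noteq> 0}},
       monoid.mult = (\<lambda>f g w. \<Sum>i\<le>length w. f (take i w) * g (drop i w)),
       monoid.one = (\<lambda>w. if w = [] then 1 else 0),
       ring.zero = (\<lambda>w. 0),
       ring.add = (\<lambda>f g w. f w + g w) \<rparr>"

text \<open>Evaluation of a polynomial p at the generator x (x = True for a, False for b)
  inside the free algebra: sum of coeff p i times the word x^i.\<close>
definition poly_gen :: "'a::field poly \<Rightarrow> bool \<Rightarrow> (bool list \<Rightarrow> 'a)" where
  "poly_gen p x = (\<lambda>w. if w = replicate (length w) x then coeff p (length w) else 0)"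

definition W_ideal :: "'a::field poly \<Rightarrow> 'a poly \<Rightarrow> (bool list \<Rightarrow> 'a) set" where
  "W_ideal p q = genideal free_alg2 {poly_gen p True, poly_gen q False}"

definition W_alg :: "'a::field poly \<Rightarrow> 'a poly \<Rightarrow> (bool list \<Rightarrow> 'a) set ring" where
  "W_alg p q = free_alg2 Quot W_ideal p q"

text \<open>The subalgebra F[x] of W_{p,q} (x = True: F[a], x = False: F[b]);
  it is spanned by the classes of 1 and x.\<close>
definition W_sub :: "'a::field poly \<Rightarrow> 'a poly \<Rightarrow> bool \<Rightarrow> (bool list \<Rightarrow> 'a) set set" where
  "W_sub p q x = { W_ideal p q +>\<^bsub>free_alg2\<^esub>
        (\<lambda>w. if w = [] then c else if w = [x] then d else 0) | c d. True }"

definition basic_units :: "'a::field poly \<Rightarrow> 'a poly \<Rightarrow> (bool list \<Rightarrow> 'a) set set" where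
  "basic_units p q = Units (W_alg p q) \<inter> (W_sub p q True \<union> W_sub p q False)"

end

(*
  The words in a and b without a factor aa or bb span W(p,q), and they are linearly
  independent: if t^2 + c1 t + c0 is the relation of the letter x, reducing with
  x x = - c1 x - c0 gives an action of the free algebra on finitely supported functions on
  such alternating words in which the relation ideal acts trivially.  In normal form, the
  coefficients of a product at alternating words of top length are products of leading
  coefficients of the factors.

  If p and q have no roots, every nonzero alpha + beta x is a unit.  A unit U of degree
  n > 0 has a single leading word, which ends in the first letter of a leading word of its
  inverse, and multiplying U by a suitable alpha + x lowers its degree; induction on the
  degree writes U as a product of basic units.

  If, say, p = (t - r)(t - s), then z = (a - r) b (a - s) has square zero, so 1 + z is a
  unit with leading word a b a.  Every product of basic units is a scalar times a product
  of non-scalar basic units in alternating letters, whose leading word is the word of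
  these letters.  Cancelling the last factor of such an expression for 1 + z leaves
  degree 2, which happens only if the inverse of that factor annihilates a - s.
*)
theory Submission
  imports Defs
begin

lemma (in ring) one_add_nilpotent_Units:
  assumes "z \<in> carrier R" "z \<otimes> z = \<zero>"
  shows "\<one> \<oplus> z \<in> Units R"
proof -
  have "(\<one> \<oplus> z) \<otimes> (\<one> \<ominus> z) = \<one>" "(\<one> \<ominus> z) \<otimes> (\<one> \<oplus> z) = \<one>"
    using assms by (simp_all add: a_minus_def l_distr r_distr r_minus l_minus a_assoc r_neg l_neg)
  then show ?thesis using assms unfolding Units_def by blast
qed

lemma irreducible_degree_2_iff_no_roots:
  fixes f :: "'a::field poly"
  assumes deg: "degree f = 2"
  shows "Factorial_Ring.irreducible f \<longleftrightarrow> (\<forall>r. poly f r \<noteq> 0)"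
proof
  assume irr: "Factorial_Ring.irreducible f"
  show "\<forall>r. poly f r \<noteq> 0"
  proof (intro allI notI)
    fix r assume "poly f r = 0"
    then obtain g where f: "f = [:- r, 1:] * g" by (metis dvdE poly_eq_0_iff_dvd)
    then have "g \<noteq> 0" using deg by auto
    then have "degree ([:- r, 1:] * g) = 1 + degree g" by (subst degree_mult_eq) simp_all
    then have "degree g = 1" using deg f by simp
    moreover have "[:- r, 1:] dvd 1 \<or> g dvd 1" by (rule Factorial_Ring.irreducibleD[OF irr f])
    ultimately show False using \<open>g \<noteq> 0\<close> by (auto simp: is_unit_iff_degree)
  qed
next
  assume no_roots: "\<forall>r. poly f r \<noteq> 0"
  show "Factorial_Ring.irreducible f"
  proof (rule Factorial_Ring.irreducibleI)
    show f0: "f \<noteq> 0" using deg by auto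
    then show "\<not> f dvd 1" using deg by (auto simp: is_unit_iff_degree)
    fix g h assume f: "f = g * h"
    show "g dvd 1 \<or> h dvd 1"
    proof (rule ccontr)
      assume "\<not> (g dvd 1 \<or> h dvd 1)"
      moreover have "g \<noteq> 0" "h \<noteq> 0" using f f0 by auto
      ultimately have "degree g \<noteq> 0" "degree h \<noteq> 0" by (auto simp: is_unit_iff_degree)
      moreover have "degree g + degree h = 2"
        using f \<open>g \<noteq> 0\<close> \<open>h \<noteq> 0\<close> deg by (simp add: degree_mult_eq)
      ultimately have "degree g = 1" by linarith
      then have "coeff g 1 \<noteq> 0" by (metis leading_coeff_0_iff one_neq_zero degree_0)
      then have "poly g (- coeff g 0 / coeff g 1) = 0"
        using \<open>degree g = 1\<close> by (simp add: poly_altdef atMost_Suc)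
      then show False using no_roots f by auto
    qed
  qed
qed

definition fsupp :: "('b \<Rightarrow> 'a::zero) \<Rightarrow> 'b set" where
  "fsupp f = {w. f w \<noteq> 0}"

definition splits :: "'b list \<Rightarrow> ('b list \<times> 'b list) set" where
  "splits w = {(u, v). u @ v = w}"

definition splits3 :: "'b list \<Rightarrow> ('b list \<times> 'b list \<times> 'b list) set" where
  "splits3 w = {(u, v, z). u @ v @ z = w}"

definition word_conv :: "('b list \<Rightarrow> 'a::comm_ring_1) \<Rightarrow> ('b list \<Rightarrow> 'a) \<Rightarrow> 'b list \<Rightarrow> 'a" where
  "word_conv f g = (\<lambda>w. \<Sum>(u, v)\<in>splits w. f u * g v)"

definition word_basis :: "'b list \<Rightarrow> 'b list \<Rightarrow> 'a::zero_neq_one" where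
  "word_basis w = (\<lambda>v. if v = w then 1 else 0)"

lemma splits_eq_image: "splits w = (\<lambda>i. (take i w, drop i w)) ` {..length w}"
proof -
  have "(u, v) \<in> (\<lambda>i. (take i w, drop i w)) ` {..length w}" if "u @ v = w" for u v
    using that by (intro image_eqI[where x = "length u"]) auto
  then show ?thesis unfolding splits_def by auto
qed

lemma finite_splits [simp]: "finite (splits w)"
  by (simp add: splits_eq_image)

lemma sum_take_drop_eq_sum_splits:
  "(\<Sum>i\<le>length w. f (take i w) * g (drop i w)) = (\<Sum>(u, v)\<in>splits w. f u * g v)"
proof -
  have "inj_on (\<lambda>i. (take i w, drop i w)) {..length w}"
    by (auto simp: inj_on_def) (metis length_take min.absorb2)
  then show ?thesis unfolding splits_eq_image by (simp add: sum.reindex)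
qed

lemma word_conv_eq_double_sum:
  fixes f g :: "'b list \<Rightarrow> 'a::comm_ring_1"
  assumes "finite A" "fsupp f \<subseteq> A" "finite B" "fsupp g \<subseteq> B"
  shows "word_conv f g w = (\<Sum>u\<in>A. \<Sum>v\<in>B. if u @ v = w then f u * g v else 0)"
proof -
  have "(\<Sum>u\<in>A. \<Sum>v\<in>B. if u @ v = w then f u * g v else 0)
      = (\<Sum>(u, v)\<in>A \<times> B. if u @ v = w then f u * g v else 0)"
    by (simp add: sum.cartesian_product)
  also have "\<dots> = (\<Sum>(u, v)\<in>(A \<times> B) \<inter> splits w. f u * g v)"
    by (rule sum.mono_neutral_cong_right) (auto simp: assms splits_def split: if_splits)
  also have "\<dots> = word_conv f g w"
    unfolding word_conv_def using assms finite_splits[of w, unfolded splits_def]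
    by (intro sum.mono_neutral_cong_left) (auto simp: fsupp_def splits_def)
  finally show ?thesis by simp
qed

lemma sum_splits_nested_left:
  "(\<Sum>(x, z)\<in>splits w. (\<Sum>(u, v)\<in>splits x. F u v) * h z) = (\<Sum>(u, v, z)\<in>splits3 w. F u v * h z)"
  for F :: "'b list \<Rightarrow> 'b list \<Rightarrow> 'a::comm_ring_1"
proof -
  have "(\<Sum>(x, z)\<in>splits w. (\<Sum>(u, v)\<in>splits x. F u v) * h z)
      = (\<Sum>s\<in>splits w. \<Sum>t\<in>splits (fst s). F (fst t) (snd t) * h (snd s))"
    by (simp add: split_def sum_distrib_right)
  also have "\<dots> = (\<Sum>(s, t)\<in>(SIGMA s:splits w. splits (fst s)). F (fst t) (snd t) * h (snd s))"
    by (rule sum.Sigma) auto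
  also have "\<dots> = (\<Sum>(u, v, z)\<in>splits3 w. F u v * h z)"
    by (rule sum.reindex_bij_witness[where i = "\<lambda>(u, v, z). ((u @ v, z), (u, v))"
          and j = "\<lambda>(s, t). (fst t, snd t, snd s)"]) (auto simp: splits3_def splits_def)
  finally show ?thesis .
qed

lemma sum_splits_nested_right:
  "(\<Sum>(u, y)\<in>splits w. f u * (\<Sum>(v, z)\<in>splits y. G v z)) = (\<Sum>(u, v, z)\<in>splits3 w. f u * G v z)"
  for G :: "'b list \<Rightarrow> 'b list \<Rightarrow> 'a::comm_ring_1"
proof -
  have "(\<Sum>(u, y)\<in>splits w. f u * (\<Sum>(v, z)\<in>splits y. G v z))
      = (\<Sum>s\<in>splits w. \<Sum>t\<in>splits (snd s). f (fst s) * G (fst t) (snd t))"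
    by (simp add: split_def sum_distrib_left)
  also have "\<dots> = (\<Sum>(s, t)\<in>(SIGMA s:splits w. splits (snd s)). f (fst s) * G (fst t) (snd t))"
    by (rule sum.Sigma) auto
  also have "\<dots> = (\<Sum>(u, v, z)\<in>splits3 w. f u * G v z)"
    by (rule sum.reindex_bij_witness[where i = "\<lambda>(u, v, z). ((u, v @ z), (v, z))"
          and j = "\<lambda>(s, t). (fst s, fst t, snd t)"]) (auto simp: splits3_def splits_def)
  finally show ?thesis .
qed

lemma word_conv_assoc: "word_conv (word_conv f g) h = word_conv f (word_conv g h)"
  unfolding word_conv_def
  by (rule ext) (simp add: sum_splits_nested_left[where F = "\<lambda>u v. f u * g v"]
      sum_splits_nested_right[where G = "\<lambda>v z. g v * h z"] mult.assoc)

lemma fsupp_word_conv: "fsupp (word_conv f g) \<subseteq> (\<lambda>(u, v). u @ v) ` (fsupp f \<times> fsupp g)"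
proof
  fix w assume "w \<in> fsupp (word_conv f g)"
  then have "(\<Sum>(u, v)\<in>splits w. f u * g v) \<noteq> 0" by (simp add: fsupp_def word_conv_def)
  then obtain u v where "(u, v) \<in> splits w" "f u * g v \<noteq> 0"
    by (metis (no_types, lifting) case_prod_conv sum.not_neutral_contains_not_neutral surj_pair)
  moreover from this have "f u \<noteq> 0" "g v \<noteq> 0" by auto
  ultimately show "w \<in> (\<lambda>(u, v). u @ v) ` (fsupp f \<times> fsupp g)"
    by (auto simp: splits_def fsupp_def image_iff)
qed

lemma finite_fsupp_word_conv:
  "finite (fsupp f) \<Longrightarrow> finite (fsupp g) \<Longrightarrow> finite (fsupp (word_conv f g))"
  by (rule finite_subset[OF fsupp_word_conv]) auto

lemma fsupp_add: "fsupp (\<lambda>w. f w + g w) \<subseteq> fsupp f \<union> fsupp g"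
  for f g :: "'b \<Rightarrow> 'a::monoid_add"
  by (auto simp: fsupp_def)

lemma finite_fsupp_add:
  "finite (fsupp f) \<Longrightarrow> finite (fsupp g) \<Longrightarrow> finite (fsupp (\<lambda>w. f w + g w))"
  for f g :: "'b \<Rightarrow> 'a::monoid_add"
  by (rule finite_subset[OF fsupp_add]) auto

lemma finite_fsupp_diff:
  "finite (fsupp f) \<Longrightarrow> finite (fsupp g) \<Longrightarrow> finite (fsupp (\<lambda>w. f w - g w))"
  for f g :: "'b \<Rightarrow> 'a::ab_group_add"
  by (rule finite_subset[of _ "fsupp f \<union> fsupp g"]) (auto simp: fsupp_def)

lemma fsupp_word_basis [simp]: "fsupp (word_basis w) = {w}"
  by (simp add: fsupp_def word_basis_def)

lemma finite_fsupp_smult_word_basis: "finite (fsupp (\<lambda>v. c * word_basis w v))"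
  for c :: "'a::comm_ring_1"
  by (rule finite_subset[of _ "{w}"]) (auto simp: fsupp_def word_basis_def)

lemma word_conv_word_basis_left:
  "word_conv (word_basis u) h = (\<lambda>v. if take (length u) v = u then h (drop (length u) v) else 0)"
proof
  fix v
  show "word_conv (word_basis u) h v = (if take (length u) v = u then h (drop (length u) v) else 0)"
  proof (cases "take (length u) v = u")
    case True
    have sub: "{(u, drop (length u) v)} \<subseteq> splits v"
      using True by (simp add: splits_def) (metis append_take_drop_id)
    have "\<forall>x\<in>splits v - {(u, drop (length u) v)}. (case x of (s, t) \<Rightarrow> word_basis u s * h t) = 0"
      by (auto simp: splits_def word_basis_def split: if_splits)
    then have "(\<Sum>(s, t)\<in>splits v. word_basis u s * h t) = (\<Sum>(s, t)\<in>{(u, drop (length u) v)}. word_basis u s * h t)"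
      by (intro sum.mono_neutral_right[OF finite_splits sub])
    then show ?thesis using True by (simp add: word_conv_def word_basis_def)
  next
    case False
    then have "(\<Sum>(s, t)\<in>splits v. word_basis u s * h t) = 0"
      by (intro sum.neutral) (force simp: splits_def word_basis_def)
    then show ?thesis using False by (simp add: word_conv_def)
  qed
qed

lemma word_conv_one_left [simp]: "word_conv (word_basis []) f = f"
  by (simp add: word_conv_word_basis_left)

lemma word_conv_one_right [simp]: "word_conv f (word_basis []) = f"
proof
  fix w
  have "word_conv f (word_basis []) w = (\<Sum>i\<le>length w. if i = length w then f (take i w) else 0)"
    unfolding word_conv_def sum_take_drop_eq_sum_splits[symmetric]
    by (intro sum.cong) (auto simp: word_basis_def)
  then show "word_conv f (word_basis []) w = f w" by simp
qed

lemma word_basis_Cons: "word_basis (x # w) = word_conv (word_basis [x]) (word_basis w)"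
proof
  fix v show "word_basis (x # w) v = word_conv (word_basis [x]) (word_basis w) v"
    unfolding word_conv_word_basis_left by (cases v) (auto simp: word_basis_def)
qed

lemma word_conv_add_left: "word_conv (\<lambda>w. f w + g w) h = (\<lambda>v. word_conv f h v + word_conv g h v)"
  by (simp add: word_conv_def distrib_right sum.distrib split_def)

lemma word_conv_add_right: "word_conv h (\<lambda>w. f w + g w) = (\<lambda>v. word_conv h f v + word_conv h g v)"
  by (simp add: word_conv_def distrib_left sum.distrib split_def)

lemma word_conv_diff_right: "word_conv h (\<lambda>w. f w - g w) = (\<lambda>v. word_conv h f v - word_conv h g v)"
  by (simp add: word_conv_def right_diff_distrib sum_subtractf split_def)

lemma word_conv_smult_left: "word_conv (\<lambda>w. c * f w) g = (\<lambda>v. c * word_conv f g v)"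
  by (simp add: word_conv_def sum_distrib_left split_def mult.assoc)

lemma carrier_free_alg2: "carrier (free_alg2 :: (bool list \<Rightarrow> 'a::field) ring) = {f. finite (fsupp f)}"
  by (simp add: free_alg2_def fsupp_def)

lemma mult_free_alg2: "monoid.mult (free_alg2 :: (bool list \<Rightarrow> 'a::field) ring) = word_conv"
  by (simp add: free_alg2_def word_conv_def sum_take_drop_eq_sum_splits fun_eq_iff)

lemma one_free_alg2: "monoid.one (free_alg2 :: (bool list \<Rightarrow> 'a::field) ring) = word_basis []"
  by (simp add: free_alg2_def word_basis_def fun_eq_iff)

lemma zero_free_alg2: "ring.zero (free_alg2 :: (bool list \<Rightarrow> 'a::field) ring) = (\<lambda>w. 0)"
  by (simp add: free_alg2_def)

lemma add_free_alg2: "ring.add (free_alg2 :: (bool list \<Rightarrow> 'a::field) ring) = (\<lambda>f g w. f w + g w)"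
  by (simp add: free_alg2_def)

lemmas free_alg2_simps =
  carrier_free_alg2 mult_free_alg2 one_free_alg2 zero_free_alg2 add_free_alg2

lemma ring_free_alg2: "ring (free_alg2 :: (bool list \<Rightarrow> 'a::field) ring)"
proof (rule ringI)
  show "abelian_group (free_alg2 :: (bool list \<Rightarrow> 'a) ring)"
  proof (rule abelian_groupI)
    fix x :: "bool list \<Rightarrow> 'a" assume "x \<in> carrier free_alg2"
    then show "\<exists>y\<in>carrier free_alg2. y \<oplus>\<^bsub>free_alg2\<^esub> x = \<zero>\<^bsub>free_alg2\<^esub>"
      unfolding free_alg2_simps by (intro bexI[where x = "\<lambda>w. - x w"]) (auto simp: fsupp_def)
  qed (auto simp: free_alg2_simps add.assoc add.commute fsupp_def
      intro: finite_fsupp_add[unfolded fsupp_def])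
  show "monoid (free_alg2 :: (bool list \<Rightarrow> 'a) ring)"
    by (rule monoidI) (auto simp: free_alg2_simps finite_fsupp_word_conv word_conv_assoc)
qed (simp_all add: free_alg2_simps word_conv_add_left word_conv_add_right)

lemma a_inv_free_alg2:
  assumes "f \<in> carrier free_alg2"
  shows "a_inv (free_alg2 :: (bool list \<Rightarrow> 'a::field) ring) f = (\<lambda>w. - f w)"
proof -
  interpret ring "free_alg2 :: (bool list \<Rightarrow> 'a) ring" by (rule ring_free_alg2)
  show ?thesis
    using assms by (intro minus_equality) (auto simp: free_alg2_simps fsupp_def)
qed

lemma a_minus_free_alg2:
  "f \<in> carrier free_alg2 \<Longrightarrow> g \<in> carrier free_alg2 \<Longrightarrow>
    a_minus (free_alg2 :: (bool list \<Rightarrow> 'a::field) ring) f g = (\<lambda>w. f w - g w)"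
  by (simp add: a_minus_def a_inv_free_alg2 free_alg2_simps)

section \<open>Alternating words and normal forms\<close>

fun alternating :: "'b list \<Rightarrow> bool" where
  "alternating [] = True"
| "alternating [x] = True"
| "alternating (x # y # w) = (x \<noteq> y \<and> alternating (y # w))"

lemma alternating_Cons: "alternating (x # w) \<longleftrightarrow> alternating w \<and> (w = [] \<or> hd w \<noteq> x)"
  by (cases w) auto

lemma alternating_append:
  "alternating (u @ v) \<longleftrightarrow> alternating u \<and> alternating v \<and> (u = [] \<or> v = [] \<or> last u \<noteq> hd v)"
  by (induction u) (auto simp: alternating_Cons)

lemma alternating_snoc: "alternating (u @ [x]) \<longleftrightarrow> alternating u \<and> (u = [] \<or> last u \<noteq> x)"
  by (simp add: alternating_append)

lemma alternating_eqI:
  fixes v w :: "bool list"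
  assumes "alternating v" "alternating w" "length v = length w" "v \<noteq> []" "last v = last w"
  shows "v = w"
  using assms
proof (induction v arbitrary: w rule: rev_induct)
  case (snoc x v)
  obtain w' y where w: "w = w' @ [y]"
    using snoc.prems(3,4) by (metis length_0_conv rev_exhaust)
  show ?case
  proof (cases "v = []")
    case False
    then have "w' \<noteq> []" using snoc.prems(3) w by auto
    then have "v = w'"
      using snoc.IH[of w'] snoc.prems w False by (auto simp: alternating_snoc)
    then show ?thesis using snoc.prems(5) w by simp
  qed (use snoc.prems w in simp)
qed simp

definition normal_forms :: "('b list \<Rightarrow> 'a::zero) set" where
  "normal_forms = {f. finite (fsupp f) \<and> (\<forall>w. f w \<noteq> 0 \<longrightarrow> alternating w)}"

lemma normal_formsD: "f \<in> normal_forms \<Longrightarrow> f w \<noteq> 0 \<Longrightarrow> alternating w"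
  by (simp add: normal_forms_def)

lemma finite_fsupp_normal_form: "f \<in> normal_forms \<Longrightarrow> finite (fsupp f)"
  by (simp add: normal_forms_def)

lemma normal_forms_add:
  "f \<in> normal_forms \<Longrightarrow> g \<in> normal_forms \<Longrightarrow> (\<lambda>v. f v + g v) \<in> normal_forms"
  for f g :: "'b list \<Rightarrow> 'a::comm_monoid_add"
  unfolding normal_forms_def using fsupp_add[of f g]
  by (auto intro: finite_subset) (metis add.right_neutral add_0)

lemma normal_forms_smult: "f \<in> normal_forms \<Longrightarrow> (\<lambda>v. c * f v) \<in> normal_forms"
  for f :: "'b list \<Rightarrow> 'a::field"
  unfolding normal_forms_def fsupp_def by (auto elim!: finite_subset[rotated])

lemma normal_forms_zero: "(\<lambda>v. 0) \<in> normal_forms"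
  by (simp add: normal_forms_def fsupp_def)

lemma normal_forms_sum:
  "finite S \<Longrightarrow> (\<And>i. i \<in> S \<Longrightarrow> F i \<in> normal_forms) \<Longrightarrow> (\<lambda>v. \<Sum>i\<in>S. F i v) \<in> normal_forms"
  by (induction S rule: finite_induct) (simp_all add: normal_forms_zero normal_forms_add)

lemma word_basis_in_normal_forms: "alternating w \<Longrightarrow> word_basis w \<in> normal_forms"
  by (auto simp: normal_forms_def word_basis_def fsupp_def)

definition deg_le :: "nat \<Rightarrow> ('b list \<Rightarrow> 'a::zero) \<Rightarrow> bool" where
  "deg_le n f \<longleftrightarrow> (\<forall>w. n < length w \<longrightarrow> f w = 0)"

lemma deg_le_exists: "finite (fsupp f) \<Longrightarrow> \<exists>n. deg_le n f"
proof -
  assume "finite (fsupp f)"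
  then obtain n where "\<forall>l\<in>length ` fsupp f. l \<le> n"
    using finite_nat_set_iff_bounded_le by (meson finite_imageI)
  then have "deg_le n f" by (auto simp: deg_le_def fsupp_def)
  then show ?thesis ..
qed

lemma butlast_last_eq_take_drop:
  "length v = Suc n \<Longrightarrow> take n v = butlast v \<and> drop n v = [last v]"
  by (metis append_butlast_last_id butlast_conv_take diff_Suc_1 drop_butlast length_butlast
      length_greater_0_conv zero_less_Suc append_take_drop_id same_append_eq)

lemma deg_le_word_basis: "deg_le (length w) (word_basis w)"
  by (simp add: deg_le_def word_basis_def)

locale quadratic_relations =
  fixes p q :: "'a::field poly"
  assumes degree_p: "degree p = 2" and monic_p: "lead_coeff p = 1"
    and degree_q: "degree q = 2" and monic_q: "lead_coeff q = 1"
begin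

definition relpoly :: "bool \<Rightarrow> 'a poly" where
  "relpoly x = (if x then p else q)"

definition c0 :: "bool \<Rightarrow> 'a" where "c0 x = coeff (relpoly x) 0"
definition c1 :: "bool \<Rightarrow> 'a" where "c1 x = coeff (relpoly x) 1"

lemma coeff_relpoly_2: "coeff (relpoly x) 2 = 1"
  using monic_p monic_q degree_p degree_q by (simp add: relpoly_def)

lemma coeff_relpoly_eq_0: "2 < n \<Longrightarrow> coeff (relpoly x) n = 0"
  using degree_p degree_q by (simp add: relpoly_def coeff_eq_0)

lemma relpoly_eq: "relpoly x = [:c0 x, c1 x, 1:]"
proof (rule poly_eqI)
  fix n show "coeff (relpoly x) n = coeff [:c0 x, c1 x, 1:] n"
    using coeff_relpoly_2[of x] coeff_relpoly_eq_0[of n x]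
    by (cases n; cases "n - 1") (auto simp: c0_def c1_def numeral_2_eq_2 coeff_pCons split: nat.splits)
qed

lemma poly_relpoly: "poly (relpoly x) r = c0 x + c1 x * r + r * r"
  by (subst relpoly_eq) (simp add: algebra_simps)

text \<open>Left multiplication of a normal form by the letter \<open>x\<close>, reduced with
  \<open>x x = - c1 x \<cdot> x - c0 x\<close>.\<close>

definition letter_act :: "bool \<Rightarrow> (bool list \<Rightarrow> 'a) \<Rightarrow> bool list \<Rightarrow> 'a" where
  "letter_act x f = (\<lambda>v. case v of
       [] \<Rightarrow> - c0 x * f [x]
     | y # w \<Rightarrow> if y = x then (if w = [] \<or> hd w \<noteq> x then f w - c1 x * f v else 0)
               else - c0 x * f (x # v))"

definition word_act :: "bool list \<Rightarrow> (bool list \<Rightarrow> 'a) \<Rightarrow> bool list \<Rightarrow> 'a" where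
  "word_act w f = foldr letter_act w f"

definition act :: "(bool list \<Rightarrow> 'a) \<Rightarrow> (bool list \<Rightarrow> 'a) \<Rightarrow> bool list \<Rightarrow> 'a" where
  "act g f = (\<lambda>v. \<Sum>w\<in>fsupp g. g w * word_act w f v)"

lemma letter_act_Nil: "letter_act x f [] = - c0 x * f [x]"
  by (simp add: letter_act_def)

lemma letter_act_Cons: "letter_act x f (y # w) =
    (if y = x then (if w = [] \<or> hd w \<noteq> x then f w - c1 x * f (y # w) else 0) else - c0 x * f (x # y # w))"
  by (simp add: letter_act_def)

lemma word_act_Nil [simp]: "word_act [] f = f"
  by (simp add: word_act_def)

lemma word_act_Cons [simp]: "word_act (x # w) f = letter_act x (word_act w f)"
  by (simp add: word_act_def)

lemma word_act_append: "word_act (u @ v) f = word_act u (word_act v f)"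
  by (simp add: word_act_def)

lemma letter_act_add: "letter_act x (\<lambda>v. f v + g v) = (\<lambda>v. letter_act x f v + letter_act x g v)"
  by (auto simp: letter_act_def fun_eq_iff algebra_simps split: list.splits)

lemma letter_act_smult: "letter_act x (\<lambda>v. c * f v) = (\<lambda>v. c * letter_act x f v)"
  by (auto simp: letter_act_def fun_eq_iff algebra_simps split: list.splits)

lemma letter_act_zero: "letter_act x (\<lambda>v. 0) = (\<lambda>v. 0)"
  by (auto simp: letter_act_def fun_eq_iff split: list.splits)

lemma word_act_add: "word_act w (\<lambda>v. f v + g v) = (\<lambda>v. word_act w f v + word_act w g v)"
  by (induction w) (simp_all add: letter_act_add)

lemma word_act_smult: "word_act w (\<lambda>v. c * f v) = (\<lambda>v. c * word_act w f v)"
  by (induction w) (simp_all add: letter_act_smult)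

lemma word_act_zero: "word_act w (\<lambda>v. 0) = (\<lambda>v. 0)"
  by (induction w) (simp_all add: letter_act_zero)

lemma word_act_sum:
  "finite S \<Longrightarrow> word_act w (\<lambda>v. \<Sum>i\<in>S. c i * F i v) = (\<lambda>v. \<Sum>i\<in>S. c i * word_act w (F i) v)"
  by (induction S rule: finite_induct) (simp_all add: word_act_zero word_act_add word_act_smult)

lemma act_eq_sum_superset:
  assumes "finite S" "fsupp g \<subseteq> S"
  shows "act g f v = (\<Sum>w\<in>S. g w * word_act w f v)"
  unfolding act_def by (rule sum.mono_neutral_left) (use assms in \<open>auto simp: fsupp_def\<close>)

lemma act_word_basis: "act (word_basis w) f = word_act w f"
  unfolding act_def fsupp_word_basis by (simp add: word_basis_def)

lemma act_add:
  assumes "finite (fsupp g)" "finite (fsupp h)"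
  shows "act (\<lambda>w. g w + h w) f = (\<lambda>v. act g f v + act h f v)"
proof
  fix v
  let ?S = "fsupp g \<union> fsupp h"
  have S: "finite ?S" using assms by simp
  have "act (\<lambda>w. g w + h w) f v = (\<Sum>w\<in>?S. (g w + h w) * word_act w f v)"
    by (rule act_eq_sum_superset[OF S]) (auto simp: fsupp_def)
  also have "\<dots> = act g f v + act h f v"
    by (simp add: distrib_right sum.distrib act_eq_sum_superset[OF S])
  finally show "act (\<lambda>w. g w + h w) f v = act g f v + act h f v" .
qed

lemma act_diff:
  assumes "finite (fsupp g)" "finite (fsupp h)"
  shows "act (\<lambda>w. g w - h w) f = (\<lambda>v. act g f v - act h f v)"
  using act_add[OF finite_fsupp_diff[OF assms] assms(2), of f] by (simp add: fun_eq_iff)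

lemma act_smult: "act (\<lambda>w. c * g w) f = (\<lambda>v. c * act g f v)"
proof (cases "c = 0")
  case True then show ?thesis by (simp add: act_def fsupp_def)
next
  case False
  then have "fsupp (\<lambda>w. c * g w) = fsupp g" by (simp add: fsupp_def)
  then show ?thesis by (simp add: act_def sum_distrib_left mult.assoc)
qed

lemma act_zero_left: "act (\<lambda>w. 0) f = (\<lambda>v. 0)"
  by (simp add: act_def fsupp_def)

lemma act_add_right: "act g (\<lambda>v. f v + h v) = (\<lambda>v. act g f v + act g h v)"
  unfolding act_def by (simp add: word_act_add distrib_left sum.distrib)

lemma act_smult_right: "act g (\<lambda>v. c * f v) = (\<lambda>v. c * act g f v)"
  unfolding act_def by (simp add: word_act_smult sum_distrib_left mult.left_commute)

lemma act_zero_right: "act g (\<lambda>v. 0) = (\<lambda>v. 0)"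
  unfolding act_def by (simp add: word_act_zero)

lemma act_word_conv:
  assumes g: "finite (fsupp g)" and h: "finite (fsupp h)"
  shows "act (word_conv g h) f = act g (act h f)"
proof
  fix y
  let ?A = "fsupp g" and ?B = "fsupp h"
  let ?S = "(\<lambda>(u, v). u @ v) ` (?A \<times> ?B)"
  have S: "finite ?S" using g h by auto
  have "act (word_conv g h) f y = (\<Sum>x\<in>?S. word_conv g h x * word_act x f y)"
    by (rule act_eq_sum_superset[OF S fsupp_word_conv])
  also have "\<dots> = (\<Sum>x\<in>?S. (\<Sum>u\<in>?A. \<Sum>v\<in>?B. if u @ v = x then g u * h v else 0) * word_act x f y)"
    by (simp add: word_conv_eq_double_sum[OF g order_refl h order_refl])
  also have "\<dots> = (\<Sum>x\<in>?S. \<Sum>u\<in>?A. \<Sum>v\<in>?B. if u @ v = x then g u * h v * word_act x f y else 0)"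
    by (auto simp: sum_distrib_right intro!: sum.cong)
  also have "\<dots> = (\<Sum>u\<in>?A. \<Sum>v\<in>?B. \<Sum>x\<in>?S. if u @ v = x then g u * h v * word_act x f y else 0)"
    by (simp add: sum.swap[of _ ?S] sum.swap[of _ ?S ?B])
  also have "\<dots> = (\<Sum>u\<in>?A. \<Sum>v\<in>?B. g u * h v * word_act (u @ v) f y)"
    using S by (intro sum.cong refl) (auto simp: sum.delta)
  also have "\<dots> = (\<Sum>u\<in>?A. g u * (\<Sum>v\<in>?B. h v * word_act u (word_act v f) y))"
    by (simp add: word_act_append sum_distrib_left mult.assoc)
  also have "\<dots> = act g (act h f) y"
    by (simp add: act_def word_act_sum[OF h])
  finally show "act (word_conv g h) f y = act g (act h f) y" .
qed

lemma fsupp_letter_act: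
  "fsupp (letter_act x f) \<subseteq> insert [] (fsupp f \<union> Cons x ` fsupp f \<union> tl ` fsupp f)"
proof
  fix v assume "v \<in> fsupp (letter_act x f)"
  then have nz: "letter_act x f v \<noteq> 0" by (simp add: fsupp_def)
  show "v \<in> insert [] (fsupp f \<union> Cons x ` fsupp f \<union> tl ` fsupp f)"
  proof (cases v)
    case (Cons y w)
    show ?thesis
    proof (cases "y = x")
      case True
      then show ?thesis using nz Cons by (auto simp: letter_act_Cons fsupp_def split: if_splits)
    next
      case False
      then have "x # v \<in> fsupp f" using nz Cons by (auto simp: letter_act_Cons fsupp_def)
      then have "tl (x # v) \<in> tl ` fsupp f" by blast
      then show ?thesis by simp
    qed
  qed simp
qed

lemma alternating_if_letter_act_nonzero:
  assumes f: "f \<in> normal_forms" and nz: "letter_act x f v \<noteq> 0"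
  shows "alternating v"
proof (cases v)
  case (Cons y w)
  show ?thesis
  proof (cases "y = x")
    case True
    with nz Cons have hd: "w = [] \<or> hd w \<noteq> x" and nz': "f w \<noteq> 0 \<or> f v \<noteq> 0"
      by (auto simp: letter_act_Cons split: if_splits)
    show ?thesis
    proof (cases "f v = 0")
      case True
      then have "alternating w" using nz' normal_formsD[OF f] by blast
      then show ?thesis using hd Cons \<open>y = x\<close> by (simp add: alternating_Cons)
    qed (use normal_formsD[OF f] in blast)
  next
    case False
    then have "f (x # v) \<noteq> 0" using nz Cons by (auto simp: letter_act_Cons)
    then have "alternating (x # v)" by (rule normal_formsD[OF f])
    then show ?thesis by (simp add: alternating_Cons)
  qed
qed simp

lemma letter_act_in_normal_forms:
  assumes f: "f \<in> normal_forms"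
  shows "letter_act x f \<in> normal_forms"
proof -
  have "finite (fsupp (letter_act x f))"
    by (rule finite_subset[OF fsupp_letter_act]) (simp add: finite_fsupp_normal_form[OF f])
  then show ?thesis
    using alternating_if_letter_act_nonzero[OF f] by (simp add: normal_forms_def)
qed

lemma word_act_in_normal_forms: "f \<in> normal_forms \<Longrightarrow> word_act w f \<in> normal_forms"
  by (induction w) (simp_all add: letter_act_in_normal_forms)

lemma act_in_normal_forms: "finite (fsupp g) \<Longrightarrow> f \<in> normal_forms \<Longrightarrow> act g f \<in> normal_forms"
  unfolding act_def by (intro normal_forms_sum normal_forms_smult word_act_in_normal_forms) auto

lemma letter_act_word_basis:
  "alternating (x # v) \<Longrightarrow> letter_act x (word_basis v) = word_basis (x # v)"
  by (auto simp: letter_act_def word_basis_def fun_eq_iff alternating_Cons split: list.splits)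

lemma word_act_word_basis: "alternating (w @ u) \<Longrightarrow> word_act w (word_basis u) = word_basis (w @ u)"
  by (induction w) (simp_all add: alternating_Cons letter_act_word_basis)

lemma letter_act_relation:
  assumes f: "f \<in> normal_forms"
  shows "letter_act x (letter_act x f) v + c1 x * letter_act x f v + c0 x * f v = 0"
proof (cases v)
  case Nil then show ?thesis by (simp add: letter_act_def algebra_simps)
next
  case (Cons y w)
  show ?thesis
  proof (cases "y = x")
    case True
    show ?thesis
    proof (cases "w = [] \<or> hd w \<noteq> x")
      case c: True
      have "letter_act x f w = - c0 x * f v"
        using c Cons True by (cases w) (auto simp: letter_act_def)
      then show ?thesis using c Cons True by (simp add: letter_act_def algebra_simps)
    next
      case False
      then have "\<not> alternating v" using Cons True by (simp add: alternating_Cons)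
      then have "f v = 0" using normal_formsD[OF f] by blast
      then show ?thesis using False Cons True by (simp add: letter_act_def)
    qed
  next
    case False
    then show ?thesis using Cons by (simp add: letter_act_def algebra_simps)
  qed
qed

definition relator :: "bool \<Rightarrow> bool list \<Rightarrow> 'a" where
  "relator x = poly_gen (relpoly x) x"

lemma fsupp_relator: "fsupp (relator x) \<subseteq> {[], [x], [x, x]}"
proof
  fix w assume "w \<in> fsupp (relator x)"
  then have "w = replicate (length w) x" and c: "coeff (relpoly x) (length w) \<noteq> 0"
    by (auto simp: fsupp_def relator_def poly_gen_def split: if_splits)
  moreover have "length w \<le> 2" using c coeff_relpoly_eq_0 by (metis not_le)
  ultimately show "w \<in> {[], [x], [x, x]}"
    by (cases w; cases "tl w"; auto simp: le_Suc_eq numeral_2_eq_2)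
qed

lemma relator_in_carrier: "relator x \<in> carrier free_alg2"
  using fsupp_relator[of x] by (simp add: carrier_free_alg2 finite_subset)

lemma relator_eq:
  "relator x = (\<lambda>w. c0 x * word_basis [] w + c1 x * word_basis [x] w + word_basis [x, x] w)"
proof
  fix w
  show "relator x w = c0 x * word_basis [] w + c1 x * word_basis [x] w + word_basis [x, x] w"
  proof (cases "w \<in> {[], [x], [x, x]}")
    case True
    then show ?thesis using coeff_relpoly_2[of x]
      by (auto simp: relator_def poly_gen_def word_basis_def c0_def c1_def numeral_2_eq_2)
  next
    case False
    then show ?thesis using fsupp_relator[of x] by (auto simp: fsupp_def word_basis_def)
  qed
qed

lemma act_relator:
  assumes f: "f \<in> normal_forms"
  shows "act (relator x) f = (\<lambda>v. 0)"
proof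
  fix v
  have "act (relator x) f v = (\<Sum>w\<in>{[], [x], [x, x]}. relator x w * word_act w f v)"
    by (rule act_eq_sum_superset[OF _ fsupp_relator]) simp
  also have "\<dots> = c0 x * f v + c1 x * letter_act x f v + letter_act x (letter_act x f) v"
    by (simp add: relator_eq word_basis_def)
  also have "\<dots> = 0" using letter_act_relation[OF f, of x v] by (simp add: algebra_simps)
  finally show "act (relator x) f v = 0" .
qed

definition annihilator :: "(bool list \<Rightarrow> 'a) set" where
  "annihilator = {g \<in> carrier free_alg2. \<forall>f\<in>normal_forms. act g f = (\<lambda>v. 0)}"

lemma ideal_annihilator: "ideal annihilator free_alg2"
proof (rule idealI[OF ring_free_alg2])
  show "subgroup annihilator (add_monoid free_alg2)"
  proof
    fix g h assume g: "g \<in> annihilator" and h: "h \<in> annihilator"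
    then show "g \<otimes>\<^bsub>add_monoid free_alg2\<^esub> h \<in> annihilator"
      by (auto simp: annihilator_def free_alg2_simps act_add finite_fsupp_add)
    have "inv\<^bsub>add_monoid free_alg2\<^esub> g = (\<lambda>w. - g w)"
      using g a_inv_free_alg2[of g] by (simp add: annihilator_def a_inv_def)
    then show "inv\<^bsub>add_monoid free_alg2\<^esub> g \<in> annihilator"
      using g act_smult[of "-1" g] by (auto simp: annihilator_def carrier_free_alg2 fsupp_def)
  qed (auto simp: annihilator_def free_alg2_simps act_zero_left fsupp_def)
next
  fix g h :: "bool list \<Rightarrow> 'a" assume g: "g \<in> annihilator" and h: "h \<in> carrier free_alg2"
  then show "h \<otimes>\<^bsub>free_alg2\<^esub> g \<in> annihilator" "g \<otimes>\<^bsub>free_alg2\<^esub> h \<in> annihilator"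
    by (auto simp: annihilator_def free_alg2_simps act_word_conv finite_fsupp_word_conv
        act_zero_right act_in_normal_forms)
qed

abbreviation rel_ideal :: "(bool list \<Rightarrow> 'a) set" where
  "rel_ideal \<equiv> W_ideal p q"

lemma W_ideal_eq: "rel_ideal = genideal free_alg2 {relator True, relator False}"
  by (simp add: W_ideal_def relator_def relpoly_def)

lemma ideal_rel_ideal: "ideal rel_ideal free_alg2"
  unfolding W_ideal_eq
  by (rule ring.genideal_ideal[OF ring_free_alg2]) (simp add: relator_in_carrier)

lemma relator_in_rel_ideal: "relator x \<in> rel_ideal"
  using ring.genideal_self[OF ring_free_alg2, of "{relator True, relator False}"] relator_in_carrier
  unfolding W_ideal_eq by (cases x) auto

lemma act_rel_ideal: "g \<in> rel_ideal \<Longrightarrow> f \<in> normal_forms \<Longrightarrow> act g f = (\<lambda>v. 0)"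
proof -
  have "rel_ideal \<subseteq> annihilator"
    unfolding W_ideal_eq
    by (rule ring.genideal_minimal[OF ring_free_alg2 ideal_annihilator])
      (auto simp: annihilator_def relator_in_carrier act_relator)
  then show "g \<in> rel_ideal \<Longrightarrow> f \<in> normal_forms \<Longrightarrow> act g f = (\<lambda>v. 0)"
    by (auto simp: annihilator_def)
qed

lemma rel_ideal_add: "g \<in> rel_ideal \<Longrightarrow> h \<in> rel_ideal \<Longrightarrow> (\<lambda>v. g v + h v) \<in> rel_ideal"
  using additive_subgroup.a_closed[OF ideal.axioms(1)[OF ideal_rel_ideal]]
  by (simp add: free_alg2_simps)

lemma rel_ideal_zero: "(\<lambda>v. 0) \<in> rel_ideal"
  using additive_subgroup.zero_closed[OF ideal.axioms(1)[OF ideal_rel_ideal]]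
  by (simp add: free_alg2_simps)

lemma rel_ideal_conv_left: "g \<in> rel_ideal \<Longrightarrow> finite (fsupp h) \<Longrightarrow> word_conv h g \<in> rel_ideal"
  using ideal.I_l_closed[OF ideal_rel_ideal, of g h] by (simp add: free_alg2_simps)

lemma rel_ideal_conv_right: "g \<in> rel_ideal \<Longrightarrow> finite (fsupp h) \<Longrightarrow> word_conv g h \<in> rel_ideal"
  using ideal.I_r_closed[OF ideal_rel_ideal, of g h] by (simp add: free_alg2_simps)

lemma rel_ideal_sum:
  assumes "finite S" "\<And>i. i \<in> S \<Longrightarrow> F i \<in> rel_ideal"
  shows "(\<lambda>v. \<Sum>i\<in>S. c i * F i v) \<in> rel_ideal"
  using assms
proof (induction S rule: finite_induct)
  case (insert i S)
  have "word_conv (\<lambda>w. c i * word_basis [] w) (F i) \<in> rel_ideal"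
    using insert.prems by (intro rel_ideal_conv_left) (simp_all add: finite_fsupp_smult_word_basis)
  then have "(\<lambda>v. c i * F i v) \<in> rel_ideal" by (simp add: word_conv_smult_left)
  with insert show ?case by (simp add: rel_ideal_add)
qed (simp add: rel_ideal_zero)

section \<open>Normal forms represent \<open>W\<^sub>p\<^sub>,\<^sub>q\<close>\<close>

text \<open>\<open>x h - letter_act x h\<close> is \<open>relator x\<close> times the part of \<open>h\<close> on words \<open>x w\<close>,
  with the leading \<open>x\<close> stripped.\<close>

lemma word_conv_letter_congruent:
  assumes h: "h \<in> normal_forms"
  shows "(\<lambda>v. word_conv (word_basis [x]) h v - letter_act x h v) \<in> rel_ideal"
proof -
  define h' where "h' = (\<lambda>w. if w = [] \<or> hd w \<noteq> x then h (x # w) else 0)"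
  have "fsupp h' \<subseteq> tl ` fsupp h"
  proof
    fix w assume "w \<in> fsupp h'"
    then have "x # w \<in> fsupp h" by (auto simp: h'_def fsupp_def split: if_splits)
    then show "w \<in> tl ` fsupp h" by (metis image_eqI list.sel(3))
  qed
  then have "finite (fsupp h')"
    using finite_fsupp_normal_form[OF h] by (meson finite_imageI finite_subset)
  then have "word_conv (relator x) h' \<in> rel_ideal"
    by (rule rel_ideal_conv_right[OF relator_in_rel_ideal])
  moreover have "word_conv (relator x) h' = (\<lambda>v. word_conv (word_basis [x]) h v - letter_act x h v)"
  proof
    fix v
    have "h (x # w') = 0" if "w' \<noteq> []" "hd w' = x" for w'
      using normal_formsD[OF h, of "x # w'"] that by (cases w') auto
    then show "word_conv (relator x) h' v = word_conv (word_basis [x]) h v - letter_act x h v"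
      unfolding relator_eq
      by (cases v rule: remdups_adj.cases)
        (auto simp: word_conv_add_left word_conv_smult_left word_conv_word_basis_left
          h'_def letter_act_Nil letter_act_Cons)
  qed
  ultimately show ?thesis by simp
qed

lemma word_conv_word_congruent:
  "f \<in> normal_forms \<Longrightarrow> (\<lambda>v. word_conv (word_basis w) f v - word_act w f v) \<in> rel_ideal"
proof (induction w arbitrary: f)
  case Nil
  then show ?case using rel_ideal_zero by simp
next
  case (Cons x w)
  have "word_conv (word_basis [x]) (\<lambda>v. word_conv (word_basis w) f v - word_act w f v) \<in> rel_ideal"
    using Cons by (intro rel_ideal_conv_left) simp_all
  moreover have "(\<lambda>v. word_conv (word_basis [x]) (word_act w f) v - letter_act x (word_act w f) v)
      \<in> rel_ideal"
    by (rule word_conv_letter_congruent[OF word_act_in_normal_forms[OF Cons.prems]])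
  ultimately have "(\<lambda>v. word_conv (word_basis [x]) (\<lambda>v. word_conv (word_basis w) f v - word_act w f v) v
      + (word_conv (word_basis [x]) (word_act w f) v - letter_act x (word_act w f) v)) \<in> rel_ideal"
    by (rule rel_ideal_add)
  then show ?case
    by (simp add: word_basis_Cons[of x w] word_conv_assoc word_conv_diff_right)
qed

lemma word_conv_eq_sum_word_basis:
  assumes g: "finite (fsupp g)" and f: "finite (fsupp f)"
  shows "word_conv g f v = (\<Sum>w\<in>fsupp g. g w * word_conv (word_basis w) f v)"
proof -
  have "word_conv (word_basis w) f v = (\<Sum>u\<in>{w}. \<Sum>t\<in>fsupp f. if u @ t = v then word_basis w u * f t else 0)" for w
    by (rule word_conv_eq_double_sum) (simp_all add: f)
  then show ?thesis
    by (simp add: word_conv_eq_double_sum[OF g order_refl f order_refl] sum_distrib_left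
        word_basis_def if_distrib cong: if_cong)
qed

lemma word_conv_congruent:
  assumes g: "finite (fsupp g)" and f: "f \<in> normal_forms"
  shows "(\<lambda>v. word_conv g f v - act g f v) \<in> rel_ideal"
proof -
  have "(\<lambda>v. word_conv g f v - act g f v)
      = (\<lambda>v. \<Sum>w\<in>fsupp g. g w * (word_conv (word_basis w) f v - word_act w f v))"
    using finite_fsupp_normal_form[OF f]
    by (simp add: word_conv_eq_sum_word_basis[OF g] act_def right_diff_distrib sum_subtractf)
  also have "\<dots> \<in> rel_ideal"
    using g f by (intro rel_ideal_sum word_conv_word_congruent)
  finally show ?thesis .
qed

definition reduce :: "(bool list \<Rightarrow> 'a) \<Rightarrow> bool list \<Rightarrow> 'a" where
  "reduce g = act g (word_basis [])"

lemma reduce_congruent: "finite (fsupp g) \<Longrightarrow> (\<lambda>v. g v - reduce g v) \<in> rel_ideal"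
  using word_conv_congruent[of g "word_basis []"]
  by (simp add: reduce_def word_basis_in_normal_forms)

lemma reduce_in_normal_forms: "finite (fsupp g) \<Longrightarrow> reduce g \<in> normal_forms"
  unfolding reduce_def by (rule act_in_normal_forms) (simp_all add: word_basis_in_normal_forms)

lemma reduce_normal_form:
  assumes f: "f \<in> normal_forms"
  shows "reduce f = f"
proof
  fix v
  have "reduce f v = (\<Sum>w\<in>fsupp f. f w * word_basis w v)"
    unfolding reduce_def act_def
  proof (intro sum.cong refl)
    fix w assume "w \<in> fsupp f"
    then have "alternating w" using normal_formsD[OF f] by (auto simp: fsupp_def)
    then show "f w * word_act w (word_basis []) v = f w * word_basis w v"
      using word_act_word_basis[of w "[]"] by simp
  qed
  also have "\<dots> = f v"
    using finite_fsupp_normal_form[OF f]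
    by (cases "v \<in> fsupp f") (auto simp: word_basis_def fsupp_def if_distrib sum.delta' cong: if_cong)
  finally show "reduce f v = f v" .
qed

lemma act_reduce:
  assumes g: "finite (fsupp g)" and f: "f \<in> normal_forms"
  shows "act (reduce g) f = act g f"
proof -
  have "act (\<lambda>w. g w - reduce g w) f = (\<lambda>v. 0)"
    using act_rel_ideal[OF reduce_congruent[OF g] f] .
  then show ?thesis
    using act_diff[OF g finite_fsupp_normal_form[OF reduce_in_normal_forms[OF g]]]
    by (simp add: fun_eq_iff)
qed

abbreviation W :: "(bool list \<Rightarrow> 'a) set ring" where
  "W \<equiv> W_alg p q"

definition coset_of :: "(bool list \<Rightarrow> 'a) \<Rightarrow> (bool list \<Rightarrow> 'a) set" where
  "coset_of g = rel_ideal +>\<^bsub>free_alg2\<^esub> g"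

lemma ring_W: "ring W"
  unfolding W_alg_def by (rule ideal.quotient_is_ring[OF ideal_rel_ideal])

lemma carrier_W: "carrier W = coset_of ` {g. finite (fsupp g)}"
  unfolding W_alg_def FactRing_def coset_of_def by (auto simp: A_RCOSETS_def' carrier_free_alg2)

lemma coset_of_in_carrier [simp]: "finite (fsupp g) \<Longrightarrow> coset_of g \<in> carrier W"
  by (simp add: carrier_W)

lemma carrier_WE:
  assumes "U \<in> carrier W"
  obtains g where "finite (fsupp g)" "U = coset_of g"
  using assms by (auto simp: carrier_W)

lemma coset_of_mult:
  "finite (fsupp g) \<Longrightarrow> finite (fsupp h) \<Longrightarrow> coset_of g \<otimes>\<^bsub>W\<^esub> coset_of h = coset_of (word_conv g h)"
  using ring_hom_mult[OF ideal.rcos_ring_hom[OF ideal_rel_ideal], of g h]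
  by (simp add: coset_of_def W_alg_def free_alg2_simps)

lemma coset_of_add:
  "finite (fsupp g) \<Longrightarrow> finite (fsupp h) \<Longrightarrow> coset_of g \<oplus>\<^bsub>W\<^esub> coset_of h = coset_of (\<lambda>w. g w + h w)"
  using ring_hom_add[OF ideal.rcos_ring_hom[OF ideal_rel_ideal], of g h]
  by (simp add: coset_of_def W_alg_def free_alg2_simps)

lemma one_W: "\<one>\<^bsub>W\<^esub> = coset_of (word_basis [])"
  by (simp add: W_alg_def FactRing_def coset_of_def free_alg2_simps)

lemma zero_W: "\<zero>\<^bsub>W\<^esub> = coset_of (\<lambda>w. 0)"
  using ring_hom_zero[OF ideal.rcos_ring_hom[OF ideal_rel_ideal] ring_free_alg2
      ideal.quotient_is_ring[OF ideal_rel_ideal]]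
  by (simp add: coset_of_def W_alg_def free_alg2_simps)

lemma coset_of_eq_iff:
  "finite (fsupp g) \<Longrightarrow> finite (fsupp h) \<Longrightarrow> coset_of g = coset_of h \<longleftrightarrow> (\<lambda>w. g w - h w) \<in> rel_ideal"
  using ring.quotient_eq_iff_same_a_r_cos[OF ring_free_alg2 ideal_rel_ideal, of g h]
  by (simp add: coset_of_def a_minus_free_alg2 carrier_free_alg2)

lemma reduce_eq_if_coset_eq:
  assumes g: "finite (fsupp g)" and h: "finite (fsupp h)" and eq: "coset_of g = coset_of h"
  shows "reduce g = reduce h"
proof -
  have "act (\<lambda>w. g w - h w) (word_basis []) = (\<lambda>v. 0)"
    using eq by (intro act_rel_ideal) (simp_all add: coset_of_eq_iff[OF g h] word_basis_in_normal_forms)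
  then show ?thesis by (simp add: reduce_def act_diff[OF g h] fun_eq_iff)
qed

lemma coset_of_reduce: "finite (fsupp g) \<Longrightarrow> coset_of (reduce g) = coset_of g"
  using reduce_congruent finite_fsupp_normal_form[OF reduce_in_normal_forms]
  by (metis coset_of_eq_iff)

definition normal_form :: "(bool list \<Rightarrow> 'a) set \<Rightarrow> bool list \<Rightarrow> 'a" where
  "normal_form U = reduce (SOME g. finite (fsupp g) \<and> U = coset_of g)"

lemma normal_form_coset_of:
  assumes "finite (fsupp g)"
  shows "normal_form (coset_of g) = reduce g"
proof -
  have "\<exists>g'. finite (fsupp g') \<and> coset_of g = coset_of g'" using assms by blast
  then have "finite (fsupp (SOME g'. finite (fsupp g') \<and> coset_of g = coset_of g'))
      \<and> coset_of g = coset_of (SOME g'. finite (fsupp g') \<and> coset_of g = coset_of g')"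
    by (rule someI_ex)
  then show ?thesis unfolding normal_form_def using reduce_eq_if_coset_eq assms by metis
qed

lemma normal_form_coset_of_normal_form: "f \<in> normal_forms \<Longrightarrow> normal_form (coset_of f) = f"
  by (simp add: normal_form_coset_of finite_fsupp_normal_form reduce_normal_form)

lemma normal_form_in_normal_forms: "U \<in> carrier W \<Longrightarrow> normal_form U \<in> normal_forms"
  by (metis carrier_WE normal_form_coset_of reduce_in_normal_forms)

lemma finite_fsupp_normal_form_W: "U \<in> carrier W \<Longrightarrow> finite (fsupp (normal_form U))"
  by (rule finite_fsupp_normal_form[OF normal_form_in_normal_forms])

lemma coset_of_normal_form: "U \<in> carrier W \<Longrightarrow> coset_of (normal_form U) = U"
  by (metis carrier_WE coset_of_reduce normal_form_coset_of)

lemma normal_form_inj: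
  "U \<in> carrier W \<Longrightarrow> V \<in> carrier W \<Longrightarrow> normal_form U = normal_form V \<Longrightarrow> U = V"
  by (metis coset_of_normal_form)

lemma normal_form_mult:
  assumes "U \<in> carrier W" "V \<in> carrier W"
  shows "normal_form (U \<otimes>\<^bsub>W\<^esub> V) = act (normal_form U) (normal_form V)"
proof -
  obtain g h where g: "finite (fsupp g)" "U = coset_of g" and h: "finite (fsupp h)" "V = coset_of h"
    using assms by (meson carrier_WE)
  have "normal_form (U \<otimes>\<^bsub>W\<^esub> V) = act g (reduce h)"
    using g h by (simp add: coset_of_mult normal_form_coset_of finite_fsupp_word_conv reduce_def act_word_conv)
  also have "\<dots> = act (reduce g) (reduce h)"
    by (rule act_reduce[symmetric, OF g(1) reduce_in_normal_forms[OF h(1)]])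
  finally show ?thesis using g h by (simp add: normal_form_coset_of)
qed

lemma normal_form_add:
  assumes "U \<in> carrier W" "V \<in> carrier W"
  shows "normal_form (U \<oplus>\<^bsub>W\<^esub> V) = (\<lambda>v. normal_form U v + normal_form V v)"
proof -
  obtain g h where g: "finite (fsupp g)" "U = coset_of g" and h: "finite (fsupp h)" "V = coset_of h"
    using assms by (meson carrier_WE)
  then show ?thesis
    by (simp add: coset_of_add normal_form_coset_of finite_fsupp_add reduce_def act_add)
qed

lemma normal_form_one: "normal_form \<one>\<^bsub>W\<^esub> = word_basis []"
  by (simp add: one_W normal_form_coset_of_normal_form word_basis_in_normal_forms)

lemma normal_form_zero: "normal_form \<zero>\<^bsub>W\<^esub> = (\<lambda>v. 0)"
  by (simp add: zero_W normal_form_coset_of_normal_form normal_forms_zero)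

lemma one_neq_zero_W: "\<one>\<^bsub>W\<^esub> \<noteq> \<zero>\<^bsub>W\<^esub>"
  using normal_form_one normal_form_zero by (metis word_basis_def one_neq_zero)

lemma deg_le_letter_act: "deg_le k g \<Longrightarrow> deg_le (Suc k) (letter_act x g)"
  by (auto simp: deg_le_def letter_act_def split: list.splits)

lemma letter_act_top_coeff:
  assumes "deg_le k g" "length w = Suc k" "alternating w"
  shows "letter_act x g w = (if hd w = x then g (tl w) else 0)"
  using assms by (cases w) (auto simp: deg_le_def letter_act_Cons alternating_Cons)

lemma word_act_top:
  assumes f: "deg_le m f"
  shows "deg_le (length u + m) (word_act u f) \<and>
    (\<forall>w. length w = length u + m \<longrightarrow> alternating w \<longrightarrow>
       word_act u f w = (if take (length u) w = u then f (drop (length u) w) else 0))"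
proof (induction u)
  case Nil
  then show ?case using f by (simp add: deg_le_def)
next
  case (Cons x u)
  then have IH: "deg_le (length u + m) (word_act u f)" by simp
  have "word_act (x # u) f w = (if take (length (x # u)) w = x # u then f (drop (length (x # u)) w) else 0)"
    if w: "length w = length (x # u) + m" and a: "alternating w" for w
  proof -
    obtain y w' where w': "w = y # w'" using w by (cases w) auto
    have "word_act (x # u) f w = (if y = x then word_act u f w' else 0)"
      using letter_act_top_coeff[OF IH, of w x] w a w' by simp
    then show ?thesis
      using Cons a w w' by (auto simp: alternating_Cons)
  qed
  then show ?case using deg_le_letter_act[OF IH] by simp
qed

lemma deg_le_act:
  assumes g: "finite (fsupp g)" "deg_le n g" and f: "deg_le m f"
  shows "deg_le (n + m) (act g f)"
  unfolding deg_le_def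
proof (intro allI impI)
  fix w :: "bool list" assume w: "n + m < length w"
  have zero: "g u * word_act u f w = 0" for u
  proof (cases "length u \<le> n")
    case True
    then show ?thesis using conjunct1[OF word_act_top[OF f, of u]] w by (simp add: deg_le_def)
  qed (use g in \<open>simp add: deg_le_def\<close>)
  show "act g f w = 0" unfolding act_def by (intro sum.neutral) (simp add: zero)
qed

lemma act_top_coeff:
  assumes g: "finite (fsupp g)" "deg_le n g" and f: "deg_le m f"
    and w: "length w = n + m" "alternating w"
  shows "act g f w = g (take n w) * f (drop n w)"
proof -
  have "g u * word_act u f w = (if u = take n w then g u * f (drop n w) else 0)" for u
  proof (cases "length u = n")
    case True
    then show ?thesis using word_act_top[OF f, of u] w by auto
  next
    case False
    show ?thesis
    proof (cases "length u < n")
      case True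
      then have "word_act u f w = 0"
        using conjunct1[OF word_act_top[OF f, of u]] w by (simp add: deg_le_def)
      then show ?thesis using False w by auto
    qed (use g False w in \<open>auto simp: deg_le_def\<close>)
  qed
  then have "act g f w = (\<Sum>u\<in>fsupp g. if u = take n w then g u * f (drop n w) else 0)"
    by (simp add: act_def)
  also have "\<dots> = g (take n w) * f (drop n w)"
    using g by (simp add: sum.delta' fsupp_def)
  finally show ?thesis .
qed

definition lin_nf :: "bool \<Rightarrow> 'a \<Rightarrow> 'a \<Rightarrow> bool list \<Rightarrow> 'a" where
  "lin_nf c \<alpha> \<beta> = (\<lambda>w. if w = [] then \<alpha> else if w = [c] then \<beta> else 0)"

definition lin :: "bool \<Rightarrow> 'a \<Rightarrow> 'a \<Rightarrow> (bool list \<Rightarrow> 'a) set" where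
  "lin c \<alpha> \<beta> = coset_of (lin_nf c \<alpha> \<beta>)"

definition scalar :: "'a \<Rightarrow> (bool list \<Rightarrow> 'a) set" where
  "scalar \<alpha> = lin True \<alpha> 0"

text \<open>The norm of \<open>\<alpha> + \<beta> c\<close>; it equals \<open>\<beta>\<^sup>2 \<cdot> relpoly c (-\<alpha>/\<beta>)\<close>.\<close>

definition lin_norm :: "bool \<Rightarrow> 'a \<Rightarrow> 'a \<Rightarrow> 'a" where
  "lin_norm c \<alpha> \<beta> = \<alpha> * \<alpha> - c1 c * \<alpha> * \<beta> + c0 c * \<beta> * \<beta>"

lemma fsupp_lin_nf: "fsupp (lin_nf c \<alpha> \<beta>) \<subseteq> {[], [c]}"
  by (auto simp: lin_nf_def fsupp_def split: if_splits)

lemma finite_fsupp_lin_nf [simp]: "finite (fsupp (lin_nf c \<alpha> \<beta>))"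
  by (rule finite_subset[OF fsupp_lin_nf]) simp

lemma lin_nf_in_normal_forms: "lin_nf c \<alpha> \<beta> \<in> normal_forms"
proof -
  have "\<forall>w. lin_nf c \<alpha> \<beta> w \<noteq> 0 \<longrightarrow> alternating w" by (simp add: lin_nf_def)
  then show ?thesis by (simp add: normal_forms_def)
qed

lemma deg_le_lin_nf: "deg_le 1 (lin_nf c \<alpha> \<beta>)"
  by (auto simp: deg_le_def lin_nf_def)

lemma lin_nf_single: "lin_nf c \<alpha> \<beta> [x] = (if x = c then \<beta> else 0)"
  by (simp add: lin_nf_def)

lemma lin_nf_const: "lin_nf c \<alpha> 0 = (\<lambda>v. \<alpha> * word_basis [] v)"
  by (auto simp: lin_nf_def word_basis_def fun_eq_iff)

lemma act_lin_nf: "act (lin_nf c \<alpha> \<beta>) f = (\<lambda>v. \<alpha> * f v + \<beta> * letter_act c f v)"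
proof
  fix v
  have "act (lin_nf c \<alpha> \<beta>) f v = (\<Sum>w\<in>{[], [c]}. lin_nf c \<alpha> \<beta> w * word_act w f v)"
    by (rule act_eq_sum_superset[OF _ fsupp_lin_nf]) simp
  then show "act (lin_nf c \<alpha> \<beta>) f v = \<alpha> * f v + \<beta> * letter_act c f v"
    by (simp add: lin_nf_def)
qed

lemma letter_act_lin_nf: "letter_act c (lin_nf c \<gamma> \<delta>) = lin_nf c (- c0 c * \<delta>) (\<gamma> - c1 c * \<delta>)"
  by (auto simp: letter_act_def lin_nf_def fun_eq_iff split: list.splits)

lemma act_lin_nf_lin_nf: "act (lin_nf c \<alpha> \<beta>) (lin_nf c \<gamma> \<delta>) =
    lin_nf c (\<alpha> * \<gamma> - \<beta> * \<delta> * c0 c) (\<alpha> * \<delta> + \<beta> * \<gamma> - \<beta> * \<delta> * c1 c)"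
  unfolding act_lin_nf letter_act_lin_nf by (auto simp: fun_eq_iff lin_nf_def algebra_simps)

lemma lin_in_carrier [simp]: "lin c \<alpha> \<beta> \<in> carrier W"
  by (simp add: lin_def)

lemma scalar_in_carrier [simp]: "scalar \<alpha> \<in> carrier W"
  by (simp add: scalar_def)

lemma normal_form_lin: "normal_form (lin c \<alpha> \<beta>) = lin_nf c \<alpha> \<beta>"
  by (simp add: lin_def normal_form_coset_of_normal_form lin_nf_in_normal_forms)

lemma W_sub_eq: "W_sub p q c = range (\<lambda>(\<alpha>, \<beta>). lin c \<alpha> \<beta>)"
  by (auto simp: W_sub_def lin_def coset_of_def lin_nf_def)

lemma lin_mult: "lin c \<alpha> \<beta> \<otimes>\<^bsub>W\<^esub> lin c \<gamma> \<delta> =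
    lin c (\<alpha> * \<gamma> - \<beta> * \<delta> * c0 c) (\<alpha> * \<delta> + \<beta> * \<gamma> - \<beta> * \<delta> * c1 c)"
  by (rule normal_form_inj) (simp_all add: ring.ring_simprules(5)[OF ring_W] normal_form_mult
      normal_form_lin act_lin_nf_lin_nf)

lemma lin_const: "lin c \<alpha> 0 = scalar \<alpha>"
  by (simp add: scalar_def lin_def lin_nf_const)

lemma scalar_one: "scalar 1 = \<one>\<^bsub>W\<^esub>"
  by (simp add: scalar_def lin_def lin_nf_const one_W)

lemma lin_zero: "lin c 0 0 = \<zero>\<^bsub>W\<^esub>"
proof -
  have "lin_nf c 0 0 = (\<lambda>w. 0)" by (simp add: lin_nf_def fun_eq_iff)
  then show ?thesis by (simp add: lin_def zero_W)
qed

lemma lin_eq_zero_iff: "lin c \<alpha> \<beta> = \<zero>\<^bsub>W\<^esub> \<longleftrightarrow> \<alpha> = 0 \<and> \<beta> = 0"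
proof
  assume "lin c \<alpha> \<beta> = \<zero>\<^bsub>W\<^esub>"
  then have "lin_nf c \<alpha> \<beta> = (\<lambda>v. 0)" by (metis normal_form_lin normal_form_zero)
  then have "lin_nf c \<alpha> \<beta> [] = 0" "lin_nf c \<alpha> \<beta> [c] = 0" by auto
  then show "\<alpha> = 0 \<and> \<beta> = 0" by (simp add: lin_nf_def)
qed (simp add: lin_zero)

lemma normal_form_scalar_mult:
  "U \<in> carrier W \<Longrightarrow> normal_form (scalar \<alpha> \<otimes>\<^bsub>W\<^esub> U) = (\<lambda>v. \<alpha> * normal_form U v)"
  by (simp add: scalar_def normal_form_mult normal_form_lin act_lin_nf)

lemma normal_form_mult_scalar:
  assumes U: "U \<in> carrier W"
  shows "normal_form (U \<otimes>\<^bsub>W\<^esub> scalar \<alpha>) = (\<lambda>v. \<alpha> * normal_form U v)"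
proof -
  have "normal_form (U \<otimes>\<^bsub>W\<^esub> scalar \<alpha>) = (\<lambda>v. \<alpha> * reduce (normal_form U) v)"
    using U by (simp add: scalar_def normal_form_mult normal_form_lin lin_nf_const act_smult_right reduce_def)
  then show ?thesis by (simp add: reduce_normal_form normal_form_in_normal_forms[OF U])
qed

lemma scalar_commute: "U \<in> carrier W \<Longrightarrow> scalar \<alpha> \<otimes>\<^bsub>W\<^esub> U = U \<otimes>\<^bsub>W\<^esub> scalar \<alpha>"
  by (rule normal_form_inj)
    (simp_all add: ring.ring_simprules(5)[OF ring_W] normal_form_scalar_mult normal_form_mult_scalar)

lemma scalar_mult: "scalar \<alpha> \<otimes>\<^bsub>W\<^esub> scalar \<beta> = scalar (\<alpha> * \<beta>)"
  using lin_mult[of True \<alpha> 0 \<beta> 0] by (simp add: lin_const)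

lemma lin_mult_conj: "lin c \<alpha> \<beta> \<otimes>\<^bsub>W\<^esub> lin c (\<alpha> - c1 c * \<beta>) (- \<beta>) = scalar (lin_norm c \<alpha> \<beta>)"
  unfolding lin_mult lin_const[of c, symmetric] lin_norm_def
  by (rule arg_cong2[where f = "lin c"]) (simp_all add: algebra_simps)

lemma zero_not_in_Units_W: "\<zero>\<^bsub>W\<^esub> \<notin> Units W"
  using ring.ring_simprules(24)[OF ring_W] one_neq_zero_W by (fastforce simp: Units_def)

lemma lin_mult_commute: "lin c \<alpha> \<beta> \<otimes>\<^bsub>W\<^esub> lin c \<gamma> \<delta> = lin c \<gamma> \<delta> \<otimes>\<^bsub>W\<^esub> lin c \<alpha> \<beta>"
  unfolding lin_mult by (simp add: algebra_simps)

lemma lin_inv: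
  assumes N: "lin_norm c \<alpha> \<beta> \<noteq> 0"
  shows "lin c \<alpha> \<beta> \<in> Units W"
    and "inv\<^bsub>W\<^esub> (lin c \<alpha> \<beta>) = lin c ((\<alpha> - c1 c * \<beta>) / lin_norm c \<alpha> \<beta>) (- \<beta> / lin_norm c \<alpha> \<beta>)"
proof -
  define N where "N = lin_norm c \<alpha> \<beta>"
  let ?V = "lin c ((\<alpha> - c1 c * \<beta>) / N) (- \<beta> / N)"
  have "\<alpha> * ((\<alpha> - c1 c * \<beta>) / N) - \<beta> * (- \<beta> / N) * c0 c = (\<alpha> * (\<alpha> - c1 c * \<beta>) + \<beta> * \<beta> * c0 c) / N"
    by (simp add: add_divide_distrib diff_divide_distrib algebra_simps)
  also have "\<dots> = 1" using N by (simp add: N_def lin_norm_def algebra_simps)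
  finally have e1: "\<alpha> * ((\<alpha> - c1 c * \<beta>) / N) - \<beta> * (- \<beta> / N) * c0 c = 1" .
  have "\<alpha> * (- \<beta> / N) + \<beta> * ((\<alpha> - c1 c * \<beta>) / N) - \<beta> * (- \<beta> / N) * c1 c
      = (\<alpha> * (- \<beta>) + \<beta> * (\<alpha> - c1 c * \<beta>) - \<beta> * (- \<beta>) * c1 c) / N"
    by (simp add: add_divide_distrib diff_divide_distrib algebra_simps)
  then have e2: "\<alpha> * (- \<beta> / N) + \<beta> * ((\<alpha> - c1 c * \<beta>) / N) - \<beta> * (- \<beta> / N) * c1 c = 0"
    by (simp add: algebra_simps)
  have r: "lin c \<alpha> \<beta> \<otimes>\<^bsub>W\<^esub> ?V = \<one>\<^bsub>W\<^esub>"
    unfolding lin_mult scalar_one[symmetric] lin_const[of c, symmetric] e1 e2 ..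
  then have l: "?V \<otimes>\<^bsub>W\<^esub> lin c \<alpha> \<beta> = \<one>\<^bsub>W\<^esub>" by (simp add: lin_mult_commute)
  from r l show "lin c \<alpha> \<beta> \<in> Units W" by (auto simp: Units_def)
  show "inv\<^bsub>W\<^esub> (lin c \<alpha> \<beta>) = lin c ((\<alpha> - c1 c * \<beta>) / lin_norm c \<alpha> \<beta>) (- \<beta> / lin_norm c \<alpha> \<beta>)"
    using monoid.inv_char[OF ring.is_monoid[OF ring_W] _ _ r l] by (simp add: N_def)
qed

lemma lin_norm_nonzero_if_Units:
  assumes "lin c \<alpha> \<beta> \<in> Units W"
  shows "lin_norm c \<alpha> \<beta> \<noteq> 0"
proof
  interpret ring W by (rule ring_W)
  assume "lin_norm c \<alpha> \<beta> = 0"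
  then have "lin c \<alpha> \<beta> \<otimes>\<^bsub>W\<^esub> lin c (\<alpha> - c1 c * \<beta>) (- \<beta>) = \<zero>\<^bsub>W\<^esub>"
    by (simp add: lin_mult_conj scalar_def lin_zero)
  then have "lin c (\<alpha> - c1 c * \<beta>) (- \<beta>) = \<zero>\<^bsub>W\<^esub>"
    using assms by (metis Units_l_inv Units_inv_closed l_one lin_in_carrier m_assoc r_null)
  then have "lin c \<alpha> \<beta> = \<zero>\<^bsub>W\<^esub>" by (simp add: lin_eq_zero_iff)
  then show False using assms zero_not_in_Units_W by simp
qed

lemma basic_units_subset_Units: "basic_units p q \<subseteq> Units W"
  by (auto simp: basic_units_def)

lemma lin_in_basic_units: "lin c \<alpha> \<beta> \<in> Units W \<Longrightarrow> lin c \<alpha> \<beta> \<in> basic_units p q"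
  by (cases c) (auto simp: basic_units_def W_sub_eq)

lemma basic_unitsE:
  assumes "k \<in> basic_units p q"
  obtains c \<alpha> \<beta> where "k = lin c \<alpha> \<beta>" "lin_norm c \<alpha> \<beta> \<noteq> 0"
proof -
  from assms obtain c \<alpha> \<beta> where "k = lin c \<alpha> \<beta>" "k \<in> Units W"
    by (auto simp: basic_units_def W_sub_eq)
  with that show thesis using lin_norm_nonzero_if_Units by blast
qed

lemma inv_basic_unit_in_basic_units:
  assumes "k \<in> basic_units p q"
  shows "inv\<^bsub>W\<^esub> k \<in> basic_units p q"
proof -
  obtain c \<alpha> \<beta> where "k = lin c \<alpha> \<beta>" "lin_norm c \<alpha> \<beta> \<noteq> 0"
    using assms by (rule basic_unitsE)
  then show ?thesis
    using monoid.Units_inv_Units[OF ring.is_monoid[OF ring_W] lin_inv(1)]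
    by (simp add: lin_inv(2) lin_in_basic_units)
qed

lemma subgroup_generate_basic_units:
  "subgroup (generate (units_of W) (basic_units p q)) (units_of W)"
  using group.generate_is_subgroup[OF monoid.units_group[OF ring.is_monoid[OF ring_W]]]
    basic_units_subset_Units by (simp add: units_of_carrier)

lemma generate_basic_units_subset_Units: "generate (units_of W) (basic_units p q) \<subseteq> Units W"
  using subgroup.subset[OF subgroup_generate_basic_units] by (simp add: units_of_carrier)

section \<open>Irreducible relations: the basic units generate\<close>

lemma right_inverse_not_constant:
  assumes x: "x \<in> normal_forms" and xy: "act x y = word_basis []"
    and n: "n \<ge> 1" "deg_le n x" "\<not> deg_le (n - 1) x"
  shows "\<not> deg_le 0 y"
proof
  assume y: "deg_le 0 y"
  have "y [] \<noteq> 0"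
  proof
    assume "y [] = 0"
    with y have "y v = 0" for v by (cases v) (auto simp: deg_le_def)
    then have "y = (\<lambda>v. 0)" by auto
    then show False using xy by (metis act_zero_right word_basis_def zero_neq_one)
  qed
  moreover have "x w * y [] = 0" if "alternating w" "length w = n" for w
  proof -
    have "x w * y [] = act x y w"
      using act_top_coeff[OF finite_fsupp_normal_form[OF x] n(2) y, of w] that by simp
    also have "\<dots> = 0" using xy that n(1) by (auto simp: word_basis_def)
    finally show ?thesis .
  qed
  ultimately have "deg_le (n - 1) x"
    using n(2) normal_formsD[OF x] by (fastforce simp: deg_le_def)
  with n(3) show False by simp
qed

text \<open>If \<open>x y = 1\<close> and \<open>y\<close> has a leading coefficient at a word \<open>v \<noteq> []\<close>, then \<open>x w \<cdot> y v\<close> is the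
  coefficient of \<open>w v\<close> in \<open>x y\<close> whenever \<open>w v\<close> is alternating; so the leading terms of \<open>x\<close>
  all end in the letter \<open>hd v\<close>.\<close>

lemma leading_words_last_letter:
  assumes x: "x \<in> normal_forms" and y: "y \<in> normal_forms" and xy: "act x y = word_basis []"
    and n: "n \<ge> 1" "deg_le n x" "\<not> deg_le (n - 1) x"
  shows "\<exists>d. \<forall>w. alternating w \<and> length w = n \<and> last w \<noteq> d \<longrightarrow> x w = 0"
proof -
  define m where "m = (LEAST m. deg_le m y)"
  have ym: "deg_le m y"
    unfolding m_def by (rule LeastI_ex[OF deg_le_exists[OF finite_fsupp_normal_form[OF y]]])
  have "m \<noteq> 0"
  proof
    assume "m = 0"
    with ym right_inverse_not_constant[OF x xy n] show False by simp
  qed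
  then have "m - 1 < m" by simp
  then have "\<not> deg_le (m - 1) y" unfolding m_def by (rule not_less_Least)
  then obtain v where v: "m - 1 < length v" and yv: "y v \<noteq> 0" by (auto simp: deg_le_def)
  have "length v \<le> m" using ym yv by (meson deg_le_def not_le)
  with v have lv: "length v = m" by linarith
  have "x w = 0" if w: "alternating w" "length w = n" "last w \<noteq> hd v" for w
  proof -
    have "alternating (w @ v)"
      using w normal_formsD[OF y yv] by (simp add: alternating_append)
    then have "act x y (w @ v) = x w * y v"
      using act_top_coeff[OF finite_fsupp_normal_form[OF x] n(2) ym, of "w @ v"] w lv by simp
    moreover have "act x y (w @ v) = 0" using xy lv \<open>m \<noteq> 0\<close> by (auto simp: word_basis_def)
    ultimately show ?thesis using yv by simp
  qed
  then show ?thesis by blast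
qed

lemma unit_leading_word:
  assumes U: "U \<in> Units W" and n: "n \<ge> 1" "deg_le n (normal_form U)" "\<not> deg_le (n - 1) (normal_form U)"
  obtains w where "alternating w" "length w = n" "normal_form U w \<noteq> 0"
    "\<And>v. alternating v \<Longrightarrow> length v = n \<Longrightarrow> v \<noteq> w \<Longrightarrow> normal_form U v = 0"
proof -
  obtain V where Uc: "U \<in> carrier W" and Vc: "V \<in> carrier W" and UV: "U \<otimes>\<^bsub>W\<^esub> V = \<one>\<^bsub>W\<^esub>"
    using U by (auto simp: Units_def)
  have x: "normal_form U \<in> normal_forms" using Uc by (rule normal_form_in_normal_forms)
  have "act (normal_form U) (normal_form V) = word_basis []"
    using normal_form_mult[OF Uc Vc] UV normal_form_one by simp
  then obtain d where d: "\<And>v. alternating v \<Longrightarrow> length v = n \<Longrightarrow> last v \<noteq> d \<Longrightarrow> normal_form U v = 0"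
    using leading_words_last_letter[OF x normal_form_in_normal_forms[OF Vc] _ n] by blast
  obtain w where "n - 1 < length w" and xw: "normal_form U w \<noteq> 0"
    using n(3) by (auto simp: deg_le_def)
  moreover have "length w \<le> n" using n(2) xw by (meson deg_le_def not_le)
  ultimately have lw: "length w = n" by linarith
  have aw: "alternating w" using normal_formsD[OF x xw] .
  have "last w = d" using d[OF aw lw] xw by blast
  then have "normal_form U v = 0" if "alternating v" "length v = n" "v \<noteq> w" for v
    using d[OF that(1,2)] alternating_eqI[OF that(1) aw] that lw n(1) by force
  with aw lw xw that show thesis by blast
qed

lemma word_act_word_basis_last_letter:
  assumes "alternating (w @ [d])"
  shows "word_act (w @ [d]) (word_basis [d]) = (\<lambda>v. - c0 d * word_basis w v + - c1 d * word_basis (w @ [d]) v)"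
proof -
  have "letter_act d (word_basis [d]) = (\<lambda>v. - c0 d * word_basis [] v + - c1 d * word_basis [d] v)"
    by (auto simp: letter_act_def word_basis_def fun_eq_iff split: list.splits)
  then have "word_act (w @ [d]) (word_basis [d])
      = (\<lambda>v. - c0 d * word_act w (word_basis []) v + - c1 d * word_act w (word_basis [d]) v)"
    by (simp only: word_act_append word_act_Cons word_act_Nil word_act_add word_act_smult)
  moreover have "alternating w" using assms by (simp add: alternating_append)
  ultimately show ?thesis using assms by (simp add: word_act_word_basis)
qed

lemma act_word_basis_letter_top:
  assumes "finite (fsupp g)" "deg_le k g" "length v = Suc k" "alternating v"
  shows "act g (word_basis [d]) v = (if last v = d then g (butlast v) else 0)"
proof -
  from act_top_coeff[OF assms(1,2) deg_le_word_basis[of "[d]"], of v] show ?thesis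
    using assms(3,4) butlast_last_eq_take_drop[OF assms(3)] by (simp add: word_basis_def)
qed

lemma deg_le_remove_leading_word:
  fixes x :: "bool list \<Rightarrow> 'a"
  assumes x: "x \<in> normal_forms" "deg_le n x" and w: "length w = n"
    and lead: "\<And>v. alternating v \<Longrightarrow> length v = n \<Longrightarrow> v \<noteq> w \<Longrightarrow> x v = 0"
  shows "deg_le (n - 1) (\<lambda>v. x v - x w * word_basis w v)"
  unfolding deg_le_def
proof (intro allI impI)
  fix v :: "bool list" assume "n - 1 < length v"
  then consider "n < length v" | "length v = n" by linarith
  then show "x v - x w * word_basis w v = 0"
  proof cases
    case 1
    then show ?thesis using x(2) w by (auto simp: deg_le_def word_basis_def)
  next
    case 2
    show ?thesis
    proof (cases "v = w")
      case False
      then have "x v = 0" using lead[OF normal_formsD[OF x(1)] 2 False] by blast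
      with False show ?thesis by (simp add: word_basis_def)
    qed (simp add: word_basis_def)
  qed
qed

lemma act_word_basis_letter_leading:
  assumes g: "finite (fsupp g)" "deg_le (n - 1) g"
    and w: "alternating (w @ [d])" "length (w @ [d]) = n" and v: "alternating v" "length v = n"
  shows "act g (word_basis [d]) v = (if v = w @ [d] then g w else 0)"
proof -
  have "v \<noteq> []" using v(2) w(2) by auto
  then have "last v = d \<longleftrightarrow> v = w @ [d]"
    using alternating_eqI[OF v(1) w(1)] v(2) w(2) by auto
  moreover have "act g (word_basis [d]) v = (if last v = d then g (butlast v) else 0)"
    using act_word_basis_letter_top[OF g _ v(1)] v(2) w(2) by simp
  ultimately show ?thesis by auto
qed

lemma act_lin_nf_split_leading_word:
  assumes x: "x \<in> normal_forms" and w: "alternating (w @ [d])"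
  shows "act x (lin_nf d \<alpha> 1) = (\<lambda>v. \<alpha> * x v
    + (act (\<lambda>u. x u - x (w @ [d]) * word_basis (w @ [d]) u) (word_basis [d]) v
    + x (w @ [d]) * (- c0 d * word_basis w v - c1 d * word_basis (w @ [d]) v)))"
proof -
  have xf: "finite (fsupp x)" using x by (rule finite_fsupp_normal_form)
  have "lin_nf d \<alpha> 1 = (\<lambda>v. \<alpha> * word_basis [] v + word_basis [d] v)"
    by (auto simp: lin_nf_def word_basis_def fun_eq_iff)
  then have "act x (lin_nf d \<alpha> 1) = (\<lambda>v. \<alpha> * x v + act x (word_basis [d]) v)"
    using reduce_normal_form[OF x] by (simp add: act_add_right act_smult_right reduce_def)
  also have "act x (word_basis [d]) = (\<lambda>v. act (\<lambda>u. x u - x (w @ [d]) * word_basis (w @ [d]) u) (word_basis [d]) v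
      + x (w @ [d]) * word_act (w @ [d]) (word_basis [d]) v)"
    using act_diff[OF xf finite_fsupp_smult_word_basis[of "x (w @ [d])" "w @ [d]"], of "word_basis [d]"]
    by (simp add: act_smult act_word_basis)
  finally show ?thesis using w by (simp add: word_act_word_basis_last_letter)
qed

text \<open>Multiplying by \<open>\<alpha> + d\<close> turns the unique leading term \<open>\<lambda> w' d\<close> of \<open>x\<close> into
  \<open>(\<alpha> \<lambda> - c1 d \<lambda> + s) w' d\<close>, where \<open>s\<close> is the coefficient of \<open>w'\<close> in \<open>x\<close>.\<close>

lemma act_lin_nf_cancels_leading_word:
  assumes x: "x \<in> normal_forms" "deg_le n x"
    and w: "alternating (w' @ [d])" "length (w' @ [d]) = n" "x (w' @ [d]) \<noteq> 0"
    and lead: "\<And>v. alternating v \<Longrightarrow> length v = n \<Longrightarrow> v \<noteq> w' @ [d] \<Longrightarrow> x v = 0"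
  shows "deg_le (n - 1) (act x (lin_nf d (c1 d - x w' / x (w' @ [d])) 1))"
proof -
  define w where "w = w' @ [d]"
  define xl where "xl = (\<lambda>v. x v - x w * word_basis w v)"
  have n: "n \<ge> 1" using w(2) by auto
  have xlf: "finite (fsupp xl)"
    unfolding xl_def by (rule finite_fsupp_diff[OF finite_fsupp_normal_form[OF x(1)] finite_fsupp_smult_word_basis])
  have xl_deg: "deg_le (n - 1) xl"
    unfolding xl_def w_def by (rule deg_le_remove_leading_word[OF x w(2) lead])
  have act_deg: "deg_le n (act xl (word_basis [d]))"
    using deg_le_act[OF xlf xl_deg deg_le_word_basis[of "[d]"]] n by simp
  have xl_w': "xl w' = x w'" by (simp add: xl_def w_def word_basis_def)
  show ?thesis
    unfolding act_lin_nf_split_leading_word[OF x(1) w(1)] xl_def[symmetric, unfolded w_def] deg_le_def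
  proof (intro allI impI)
    fix v :: "bool list" assume v: "n - 1 < length v"
    let ?\<alpha> = "c1 d - x w' / x (w' @ [d])"
    show "?\<alpha> * x v + (act xl (word_basis [d]) v
        + x (w' @ [d]) * (- c0 d * word_basis w' v - c1 d * word_basis (w' @ [d]) v)) = 0"
    proof (cases "length v = n")
      case False
      then have "n < length v" using v by simp
      then show ?thesis using x(2) act_deg w(2) by (auto simp: deg_le_def word_basis_def)
    next
      case l: True
      then have w'v: "v \<noteq> w'" using w(2) by auto
      show ?thesis
      proof (cases "alternating v")
        case False
        moreover have "alternating [d]" by simp
        ultimately have "x v = 0" "act xl (word_basis [d]) v = 0" "v \<noteq> w' @ [d]"
          using normal_formsD[OF x(1)] normal_formsD[OF act_in_normal_forms[OF xlf word_basis_in_normal_forms]] w(1)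
          by (blast, blast, auto)
        then show ?thesis using w'v by (simp add: word_basis_def)
      next
        case a: True
        note top = act_word_basis_letter_leading[OF xlf xl_deg w(1,2) a l]
        show ?thesis
        proof (cases "v = w' @ [d]")
          case True
          then show ?thesis
            using top w'v w(3) by (simp add: word_basis_def xl_w' field_simps)
        qed (use top lead[OF a l] w'v in \<open>simp add: word_basis_def\<close>)
      qed
    qed
  qed
qed

lemma degree_descent:
  assumes no_roots: "\<And>c r. poly (relpoly c) r \<noteq> 0"
    and U: "U \<in> Units W" and n: "n \<ge> 1" "deg_le n (normal_form U)" "\<not> deg_le (n - 1) (normal_form U)"
  shows "\<exists>k\<in>basic_units p q. deg_le (n - 1) (normal_form (U \<otimes>\<^bsub>W\<^esub> k))"
proof -
  have Uc: "U \<in> carrier W" using U by (simp add: Units_def)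
  obtain w where w: "alternating w" "length w = n" "normal_form U w \<noteq> 0"
    and lead: "\<And>v. alternating v \<Longrightarrow> length v = n \<Longrightarrow> v \<noteq> w \<Longrightarrow> normal_form U v = 0"
    using unit_leading_word[OF U n] by blast
  obtain w' d where ww: "w = w' @ [d]"
    using w(2) n(1) by (metis le_zero_eq length_0_conv not_one_le_zero rev_exhaust)
  define \<alpha> where "\<alpha> = c1 d - normal_form U w' / normal_form U w"
  have "lin_norm d \<alpha> 1 \<noteq> 0"
    using no_roots[of d "- \<alpha>"] by (simp add: poly_relpoly lin_norm_def algebra_simps)
  then have "lin d \<alpha> 1 \<in> basic_units p q" by (intro lin_in_basic_units lin_inv(1))
  moreover have "deg_le (n - 1) (normal_form (U \<otimes>\<^bsub>W\<^esub> lin d \<alpha> 1))"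
    using act_lin_nf_cancels_leading_word[OF normal_form_in_normal_forms[OF Uc] n(2)] w lead
    by (simp add: normal_form_mult[OF Uc] normal_form_lin \<alpha>_def ww)
  ultimately show ?thesis by blast
qed

lemma scalar_if_deg_le_0:
  assumes U: "U \<in> carrier W" and "deg_le 0 (normal_form U)"
  shows "U = scalar (normal_form U [])"
proof -
  have "normal_form U = lin_nf True (normal_form U []) 0"
    using assms(2) by (auto simp: deg_le_def lin_nf_def fun_eq_iff)
  then show ?thesis by (metis U coset_of_normal_form lin_def scalar_def)
qed

lemma in_generate_if_mult_basic_unit:
  assumes U: "U \<in> Units W" and k: "k \<in> basic_units p q"
    and Uk: "U \<otimes>\<^bsub>W\<^esub> k \<in> generate (units_of W) (basic_units p q)"
  shows "U \<in> generate (units_of W) (basic_units p q)"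
proof -
  interpret R: ring W by (rule ring_W)
  have kU: "k \<in> Units W" using k basic_units_subset_Units by blast
  have "(U \<otimes>\<^bsub>W\<^esub> k) \<otimes>\<^bsub>units_of W\<^esub> inv\<^bsub>units_of W\<^esub> k \<in> generate (units_of W) (basic_units p q)"
    using Uk k by (intro subgroup.m_closed[OF subgroup_generate_basic_units] generate.inv)
  moreover have "(U \<otimes>\<^bsub>W\<^esub> k) \<otimes>\<^bsub>units_of W\<^esub> inv\<^bsub>units_of W\<^esub> k = U"
    using U kU by (simp add: units_of_mult R.units_of_inv R.m_assoc R.Units_closed R.Units_inv_closed)
  ultimately show ?thesis by simp
qed

lemma Units_subset_generate_if_no_roots:
  assumes no_roots: "\<And>c r. poly (relpoly c) r \<noteq> 0"
  shows "Units W \<subseteq> generate (units_of W) (basic_units p q)"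
proof
  fix U assume U: "U \<in> Units W"
  then have Uc: "U \<in> carrier W" by (simp add: Units_def)
  obtain n where "deg_le n (normal_form U)"
    using deg_le_exists[OF finite_fsupp_normal_form_W[OF Uc]] ..
  then show "U \<in> generate (units_of W) (basic_units p q)"
    using U
  proof (induction n arbitrary: U)
    case 0
    then have "U = scalar (normal_form U [])"
      by (intro scalar_if_deg_le_0) (simp_all add: Units_def)
    then have "U \<in> basic_units p q"
      using 0 by (metis lin_const lin_in_basic_units)
    then show ?case by (rule generate.incl)
  next
    case (Suc n)
    show ?case
    proof (cases "deg_le n (normal_form U)")
      case False
      then obtain k where k: "k \<in> basic_units p q" and "deg_le n (normal_form (U \<otimes>\<^bsub>W\<^esub> k))"
        using degree_descent[OF no_roots Suc.prems(2) _ Suc.prems(1)] by auto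
      moreover have "U \<otimes>\<^bsub>W\<^esub> k \<in> Units W"
        using Suc.prems(2) k basic_units_subset_Units monoid.Units_m_closed[OF ring.is_monoid[OF ring_W]] by blast
      ultimately have "U \<otimes>\<^bsub>W\<^esub> k \<in> generate (units_of W) (basic_units p q)"
        using Suc.IH by blast
      with Suc.prems(2) k show ?thesis by (rule in_generate_if_mult_basic_unit)
    qed (use Suc in blast)
  qed
qed

section \<open>A root of a relation: the basic units do not generate\<close>

definition reduced_prod :: "(bool \<times> 'a \<times> 'a) list \<Rightarrow> (bool list \<Rightarrow> 'a) set" where
  "reduced_prod ks = foldl (\<lambda>P (c, \<alpha>, \<beta>). P \<otimes>\<^bsub>W\<^esub> lin c \<alpha> \<beta>) \<one>\<^bsub>W\<^esub> ks"

definition reduced :: "(bool \<times> 'a \<times> 'a) list \<Rightarrow> bool" where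
  "reduced ks \<longleftrightarrow> alternating (map fst ks) \<and> (\<forall>(c, \<alpha>, \<beta>)\<in>set ks. \<beta> \<noteq> 0 \<and> lin_norm c \<alpha> \<beta> \<noteq> 0)"

definition has_reduced_form :: "(bool list \<Rightarrow> 'a) set \<Rightarrow> bool" where
  "has_reduced_form U \<longleftrightarrow> (\<exists>\<kappa> ks. \<kappa> \<noteq> 0 \<and> reduced ks \<and> U = scalar \<kappa> \<otimes>\<^bsub>W\<^esub> reduced_prod ks)"

lemma reduced_prod_Nil [simp]: "reduced_prod [] = \<one>\<^bsub>W\<^esub>"
  by (simp add: reduced_prod_def)

lemma reduced_prod_snoc: "reduced_prod (ks @ [(c, \<alpha>, \<beta>)]) = reduced_prod ks \<otimes>\<^bsub>W\<^esub> lin c \<alpha> \<beta>"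
  by (simp add: reduced_prod_def)

lemma reduced_Nil [simp]: "reduced []"
  by (simp add: reduced_def)

lemma reduced_snoc: "reduced (ks @ [(c, \<alpha>, \<beta>)]) \<longleftrightarrow>
    reduced ks \<and> (ks = [] \<or> fst (last ks) \<noteq> c) \<and> \<beta> \<noteq> 0 \<and> lin_norm c \<alpha> \<beta> \<noteq> 0"
  by (auto simp: reduced_def alternating_snoc last_map)

lemma reduced_prod_Units: "reduced ks \<Longrightarrow> reduced_prod ks \<in> Units W"
proof (induction ks rule: rev_induct)
  case (snoc k ks)
  then show ?case
    by (cases k) (auto simp: reduced_snoc reduced_prod_snoc lin_inv(1)
        intro: monoid.Units_m_closed[OF ring.is_monoid[OF ring_W]])
qed (simp add: monoid.Units_one_closed[OF ring.is_monoid[OF ring_W]])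

lemma reduced_prod_in_carrier: "reduced ks \<Longrightarrow> reduced_prod ks \<in> carrier W"
  using reduced_prod_Units by (simp add: Units_def)

lemma deg_le_reduced_prod: "reduced ks \<Longrightarrow> deg_le (length ks) (normal_form (reduced_prod ks))"
proof (induction ks rule: rev_induct)
  case Nil
  then show ?case by (simp add: normal_form_one deg_le_def word_basis_def)
next
  case (snoc k ks)
  obtain c \<alpha> \<beta> where k: "k = (c, \<alpha>, \<beta>)" by (cases k) auto
  have ks: "reduced ks" using snoc.prems by (simp add: k reduced_snoc)
  have P: "reduced_prod ks \<in> carrier W" by (rule reduced_prod_in_carrier[OF ks])
  show ?case
    using deg_le_act[OF finite_fsupp_normal_form_W[OF P] snoc.IH[OF ks] deg_le_lin_nf]
    by (simp add: k reduced_prod_snoc normal_form_mult[OF P] normal_form_lin)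
qed

lemma normal_form_reduced_prod_top:
  assumes "reduced ks"
  shows "\<exists>\<gamma>. \<gamma> \<noteq> 0 \<and> (\<forall>w. alternating w \<longrightarrow> length w = length ks \<longrightarrow>
    normal_form (reduced_prod ks) w = (if w = map fst ks then \<gamma> else 0))"
  using assms
proof (induction ks rule: rev_induct)
  case Nil
  then show ?case by (auto simp: normal_form_one word_basis_def)
next
  case (snoc k ks)
  obtain c \<alpha> \<beta> where k: "k = (c, \<alpha>, \<beta>)" by (cases k) auto
  have ks: "reduced ks" and \<beta>: "\<beta> \<noteq> 0" using snoc.prems by (simp_all add: k reduced_snoc)
  obtain \<gamma> where \<gamma>: "\<gamma> \<noteq> 0" and top: "\<And>w. alternating w \<Longrightarrow> length w = length ks \<Longrightarrow>
      normal_form (reduced_prod ks) w = (if w = map fst ks then \<gamma> else 0)"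
    using snoc.IH[OF ks] by blast
  have P: "reduced_prod ks \<in> carrier W" by (rule reduced_prod_in_carrier[OF ks])
  have "normal_form (reduced_prod (ks @ [k])) w = (if w = map fst (ks @ [k]) then \<gamma> * \<beta> else 0)"
    if w: "alternating w" "length w = length (ks @ [k])" for w
  proof -
    have l: "length w = Suc (length ks)" using w by simp
    then have "w \<noteq> []" by auto
    then have "alternating (butlast w)" using w(1) by (metis alternating_append append_butlast_last_id)
    moreover have "normal_form (reduced_prod (ks @ [k])) w
        = normal_form (reduced_prod ks) (butlast w) * lin_nf c \<alpha> \<beta> [last w]"
      using act_top_coeff[OF finite_fsupp_normal_form_W[OF P] deg_le_reduced_prod[OF ks] deg_le_lin_nf, of w]
        w(1) l butlast_last_eq_take_drop[OF l]
      by (simp add: k reduced_prod_snoc normal_form_mult[OF P] normal_form_lin)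
    moreover have "butlast w = map fst ks \<and> last w = c \<longleftrightarrow> w = map fst ks @ [c]"
    proof
      assume "butlast w = map fst ks \<and> last w = c"
      then show "w = map fst ks @ [c]" using append_butlast_last_id[OF \<open>w \<noteq> []\<close>] by simp
    qed simp
    ultimately show ?thesis using l by (auto simp: k top lin_nf_single)
  qed
  then show ?case using \<gamma> \<beta> by (intro exI[where x = "\<gamma> * \<beta>"]) auto
qed

lemma has_reduced_form_in_carrier: "has_reduced_form U \<Longrightarrow> U \<in> carrier W"
  using ring.ring_simprules(5)[OF ring_W] by (auto simp: has_reduced_form_def reduced_prod_in_carrier)

lemma has_reduced_form_mult_scalar:
  assumes "has_reduced_form U" "\<mu> \<noteq> 0"
  shows "has_reduced_form (U \<otimes>\<^bsub>W\<^esub> scalar \<mu>)"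
proof -
  interpret R: ring W by (rule ring_W)
  obtain \<kappa> ks where \<kappa>: "\<kappa> \<noteq> 0" and ks: "reduced ks" and U: "U = scalar \<kappa> \<otimes>\<^bsub>W\<^esub> reduced_prod ks"
    using assms(1) by (auto simp: has_reduced_form_def)
  have P: "reduced_prod ks \<in> carrier W" using ks by (rule reduced_prod_in_carrier)
  then have "U \<otimes>\<^bsub>W\<^esub> scalar \<mu> = scalar \<kappa> \<otimes>\<^bsub>W\<^esub> (scalar \<mu> \<otimes>\<^bsub>W\<^esub> reduced_prod ks)"
    by (simp add: U R.m_assoc scalar_commute[OF P, symmetric])
  also have "\<dots> = scalar (\<kappa> * \<mu>) \<otimes>\<^bsub>W\<^esub> reduced_prod ks"
    using P by (simp add: R.m_assoc[symmetric] scalar_mult)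
  finally have "U \<otimes>\<^bsub>W\<^esub> scalar \<mu> = scalar (\<kappa> * \<mu>) \<otimes>\<^bsub>W\<^esub> reduced_prod ks" .
  with \<kappa> ks assms(2) show ?thesis
    unfolding has_reduced_form_def by (intro exI[of _ "\<kappa> * \<mu>"] exI[of _ ks]) simp
qed

lemma has_reduced_form_mult_lin_same_letter:
  assumes ks: "reduced (ks @ [(c, \<alpha>', \<beta>')])" and \<kappa>: "\<kappa> \<noteq> 0" and N: "lin_norm c \<alpha> \<beta> \<noteq> 0"
  shows "has_reduced_form (scalar \<kappa> \<otimes>\<^bsub>W\<^esub> reduced_prod (ks @ [(c, \<alpha>', \<beta>')]) \<otimes>\<^bsub>W\<^esub> lin c \<alpha> \<beta>)"
proof -
  interpret R: ring W by (rule ring_W)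
  define \<alpha>'' where "\<alpha>'' = \<alpha>' * \<alpha> - \<beta>' * \<beta> * c0 c"
  define \<beta>'' where "\<beta>'' = \<alpha>' * \<beta> + \<beta>' * \<alpha> - \<beta>' * \<beta> * c1 c"
  have ks0: "reduced ks" "ks = [] \<or> fst (last ks) \<noteq> c" "lin_norm c \<alpha>' \<beta>' \<noteq> 0"
    using assms by (simp_all add: reduced_snoc)
  have P: "reduced_prod ks \<in> carrier W" by (rule reduced_prod_in_carrier[OF ks0(1)])
  have U0: "has_reduced_form (scalar \<kappa> \<otimes>\<^bsub>W\<^esub> reduced_prod ks)"
    using \<kappa> ks0(1) by (auto simp: has_reduced_form_def)
  have eq: "scalar \<kappa> \<otimes>\<^bsub>W\<^esub> reduced_prod (ks @ [(c, \<alpha>', \<beta>')]) \<otimes>\<^bsub>W\<^esub> lin c \<alpha> \<beta>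
      = scalar \<kappa> \<otimes>\<^bsub>W\<^esub> reduced_prod ks \<otimes>\<^bsub>W\<^esub> lin c \<alpha>'' \<beta>''"
    by (simp add: reduced_prod_snoc R.m_assoc P lin_mult \<alpha>''_def \<beta>''_def)
  have "lin c \<alpha>' \<beta>' \<otimes>\<^bsub>W\<^esub> lin c \<alpha> \<beta> \<in> Units W"
    using lin_inv(1)[OF N] lin_inv(1)[OF ks0(3)] by (rule R.Units_m_closed[rotated])
  then have "lin c \<alpha>'' \<beta>'' \<in> Units W" by (simp add: lin_mult \<alpha>''_def \<beta>''_def)
  then have N'': "lin_norm c \<alpha>'' \<beta>'' \<noteq> 0" by (rule lin_norm_nonzero_if_Units)
  show ?thesis
  proof (cases "\<beta>'' = 0")
    case True
    then show ?thesis
      using has_reduced_form_mult_scalar[OF U0] N'' by (simp add: eq lin_const lin_norm_def)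
  next
    case False
    then have "reduced (ks @ [(c, \<alpha>'', \<beta>'')])" using ks0 N'' by (simp add: reduced_snoc)
    moreover have "scalar \<kappa> \<otimes>\<^bsub>W\<^esub> reduced_prod ks \<otimes>\<^bsub>W\<^esub> lin c \<alpha>'' \<beta>''
        = scalar \<kappa> \<otimes>\<^bsub>W\<^esub> reduced_prod (ks @ [(c, \<alpha>'', \<beta>'')])"
      by (simp add: reduced_prod_snoc R.m_assoc P)
    ultimately show ?thesis using \<kappa> unfolding eq has_reduced_form_def by metis
  qed
qed

text \<open>Right multiplication by a basic unit: a scalar is absorbed, a unit in a new letter is
  appended, and a unit in the last letter is merged with the last factor.\<close>

lemma has_reduced_form_mult_basic_unit:
  assumes U: "has_reduced_form U" and k: "k \<in> basic_units p q"
  shows "has_reduced_form (U \<otimes>\<^bsub>W\<^esub> k)"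
proof -
  interpret R: ring W by (rule ring_W)
  obtain c \<alpha> \<beta> where k: "k = lin c \<alpha> \<beta>" and N: "lin_norm c \<alpha> \<beta> \<noteq> 0"
    using k by (rule basic_unitsE)
  obtain \<kappa> ks where \<kappa>: "\<kappa> \<noteq> 0" and ks: "reduced ks" and U: "U = scalar \<kappa> \<otimes>\<^bsub>W\<^esub> reduced_prod ks"
    using assms(1) by (auto simp: has_reduced_form_def)
  have P: "reduced_prod ks \<in> carrier W" by (rule reduced_prod_in_carrier[OF ks])
  consider "\<beta> = 0" | "\<beta> \<noteq> 0" "ks = [] \<or> fst (last ks) \<noteq> c"
    | ks0 \<alpha>' \<beta>' where "ks = ks0 @ [(c, \<alpha>', \<beta>')]"
  proof (cases "\<beta> = 0 \<or> ks = [] \<or> fst (last ks) \<noteq> c")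
    case False
    then obtain ks0 k' where "ks = ks0 @ [k']" by (meson rev_exhaust)
    with False that(3) show ?thesis by (cases k') auto
  qed (use that in blast)
  then show ?thesis
  proof cases
    case 1
    then show ?thesis
      using has_reduced_form_mult_scalar[OF assms(1)] N by (simp add: k lin_const lin_norm_def)
  next
    case 2
    then have "reduced (ks @ [(c, \<alpha>, \<beta>)])" using ks N by (simp add: reduced_snoc)
    moreover have "U \<otimes>\<^bsub>W\<^esub> k = scalar \<kappa> \<otimes>\<^bsub>W\<^esub> reduced_prod (ks @ [(c, \<alpha>, \<beta>)])"
      by (simp add: U k reduced_prod_snoc R.m_assoc P)
    ultimately show ?thesis using \<kappa> by (auto simp: has_reduced_form_def)
  next
    case 3
    then show ?thesis
      using has_reduced_form_mult_lin_same_letter ks \<kappa> N by (simp add: U k)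
  qed
qed

lemma has_reduced_form_if_generated:
  assumes "U \<in> generate (units_of W) (basic_units p q)"
  shows "has_reduced_form U"
proof -
  interpret R: ring W by (rule ring_W)
  have mult: "has_reduced_form (V \<otimes>\<^bsub>W\<^esub> U)" if "has_reduced_form V" for V
    using assms that
  proof (induction U arbitrary: V rule: generate.induct)
    case one
    then show ?case by (simp add: units_of_one has_reduced_form_in_carrier)
  next
    case (incl h)
    then show ?case by (intro has_reduced_form_mult_basic_unit)
  next
    case (inv h)
    then show ?case
      using has_reduced_form_mult_basic_unit[OF _ inv_basic_unit_in_basic_units] basic_units_subset_Units
      by (auto simp: R.units_of_inv)
  next
    case (eng h1 h2)
    have "h1 \<in> carrier W" "h2 \<in> carrier W"
      using eng.hyps generate_basic_units_subset_Units by (auto simp: Units_def)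
    moreover have "V \<in> carrier W" using eng.prems by (rule has_reduced_form_in_carrier)
    ultimately show ?case
      using eng.IH eng.prems by (simp add: units_of_mult R.m_assoc[symmetric])
  qed
  have "has_reduced_form \<one>\<^bsub>W\<^esub>"
    unfolding has_reduced_form_def by (intro exI[of _ 1] exI[of _ "[]"]) (simp add: scalar_one)
  then have "has_reduced_form (\<one>\<^bsub>W\<^esub> \<otimes>\<^bsub>W\<^esub> U)" by (rule mult)
  moreover have "U \<in> carrier W"
    using assms generate_basic_units_subset_Units by (auto simp: Units_def)
  ultimately show ?thesis by simp
qed

lemma reduced_form_letters:
  assumes U: "has_reduced_form U" and deg: "deg_le n (normal_form U)"
    and w: "alternating w" "length w = n" "normal_form U w \<noteq> 0"
  obtains \<kappa> ks where "\<kappa> \<noteq> 0" "reduced ks" "U = scalar \<kappa> \<otimes>\<^bsub>W\<^esub> reduced_prod ks" "map fst ks = w"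
proof -
  obtain \<kappa> ks where \<kappa>: "\<kappa> \<noteq> 0" and ks: "reduced ks" and U: "U = scalar \<kappa> \<otimes>\<^bsub>W\<^esub> reduced_prod ks"
    using assms(1) by (auto simp: has_reduced_form_def)
  have nf: "normal_form U = (\<lambda>v. \<kappa> * normal_form (reduced_prod ks) v)"
    by (simp add: U normal_form_scalar_mult reduced_prod_in_carrier[OF ks])
  have deg_ks: "deg_le (length ks) (normal_form (reduced_prod ks))" by (rule deg_le_reduced_prod[OF ks])
  obtain \<gamma> where \<gamma>: "\<gamma> \<noteq> 0" and top: "\<And>v. alternating v \<Longrightarrow> length v = length ks \<Longrightarrow>
      normal_form (reduced_prod ks) v = (if v = map fst ks then \<gamma> else 0)"
    using normal_form_reduced_prod_top[OF ks] by blast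
  have "\<not> length ks < n" using deg_ks w by (auto simp: nf deg_le_def)
  moreover have "\<not> n < length ks"
    using deg top[of "map fst ks"] ks \<kappa> \<gamma> by (auto simp: nf deg_le_def reduced_def)
  ultimately have "length ks = n" by simp
  then have "map fst ks = w" using top[OF w(1)] w by (auto simp: nf split: if_splits)
  with \<kappa> ks U that show thesis by blast
qed

lemma reduced_form_cancel_last_factor:
  assumes U: "has_reduced_form U" and deg: "deg_le n (normal_form U)"
    and w: "alternating (w @ [d])" "length (w @ [d]) = n" "normal_form U (w @ [d]) \<noteq> 0"
  obtains \<alpha> \<beta> where "lin d \<alpha> \<beta> \<in> Units W" "deg_le (n - 1) (normal_form (U \<otimes>\<^bsub>W\<^esub> lin d \<alpha> \<beta>))"
proof -
  interpret R: ring W by (rule ring_W)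
  obtain \<kappa> ks where \<kappa>: "\<kappa> \<noteq> 0" and ks: "reduced ks" and U_eq: "U = scalar \<kappa> \<otimes>\<^bsub>W\<^esub> reduced_prod ks"
    and letters: "map fst ks = w @ [d]"
    by (rule reduced_form_letters[OF U deg w])
  have "ks \<noteq> []" using letters by auto
  then obtain ks' k where ks_eq: "ks = ks' @ [k]" by (meson rev_exhaust)
  then have "map fst ks' = w" "fst k = d" using letters by auto
  then obtain \<alpha>' \<beta>' where ks': "ks = ks' @ [(d, \<alpha>', \<beta>')]" and "length ks' = n - 1"
    using ks_eq w(2) by (cases k) (auto dest: arg_cong[where f = length])
  have N: "lin_norm d \<alpha>' \<beta>' \<noteq> 0" and red: "reduced ks'" using ks by (simp_all add: ks' reduced_snoc)
  have P: "reduced_prod ks' \<in> carrier W" by (rule reduced_prod_in_carrier[OF red])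
  have k: "lin d \<alpha>' \<beta>' \<in> Units W" by (rule lin_inv(1)[OF N])
  have "U \<otimes>\<^bsub>W\<^esub> inv\<^bsub>W\<^esub> (lin d \<alpha>' \<beta>') = scalar \<kappa> \<otimes>\<^bsub>W\<^esub> reduced_prod ks'"
    using k P by (simp add: U_eq ks' reduced_prod_snoc R.m_assoc)
  then have "deg_le (n - 1) (normal_form (U \<otimes>\<^bsub>W\<^esub> inv\<^bsub>W\<^esub> (lin d \<alpha>' \<beta>')))"
    using deg_le_reduced_prod[OF red] \<open>length ks' = n - 1\<close>
    by (simp add: normal_form_scalar_mult P deg_le_def)
  moreover have "inv\<^bsub>W\<^esub> (lin d \<alpha>' \<beta>') \<in> Units W" using k by simp
  ultimately show thesis using that by (simp add: lin_inv(2)[OF N])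
qed

lemma normal_form_three_letters:
  assumes "e \<noteq> d"
  shows "deg_le 3 (normal_form (lin d \<alpha> 1 \<otimes>\<^bsub>W\<^esub> lin e 0 1 \<otimes>\<^bsub>W\<^esub> lin d \<gamma> 1))"
    and "normal_form (lin d \<alpha> 1 \<otimes>\<^bsub>W\<^esub> lin e 0 1 \<otimes>\<^bsub>W\<^esub> lin d \<gamma> 1) [d, e, d] = 1"
proof -
  interpret R: ring W by (rule ring_W)
  let ?AB = "lin d \<alpha> 1 \<otimes>\<^bsub>W\<^esub> lin e 0 1"
  have AB: "normal_form ?AB = act (lin_nf d \<alpha> 1) (lin_nf e 0 1)"
    by (simp add: normal_form_mult normal_form_lin)
  have deg_AB: "deg_le 2 (normal_form ?AB)"
    using deg_le_act[OF finite_fsupp_lin_nf deg_le_lin_nf deg_le_lin_nf] by (simp add: AB numeral_2_eq_2)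
  have AB_de: "normal_form ?AB [d, e] = 1"
    unfolding AB using act_top_coeff[OF finite_fsupp_lin_nf deg_le_lin_nf deg_le_lin_nf, of "[d, e]"] assms
    by (simp add: lin_nf_single)
  have fin: "finite (fsupp (normal_form ?AB))" by (simp add: finite_fsupp_normal_form_W)
  have ABC: "normal_form (?AB \<otimes>\<^bsub>W\<^esub> lin d \<gamma> 1) = act (normal_form ?AB) (lin_nf d \<gamma> 1)"
    by (simp add: normal_form_mult normal_form_lin)
  show "deg_le 3 (normal_form (?AB \<otimes>\<^bsub>W\<^esub> lin d \<gamma> 1))"
    using deg_le_act[OF fin deg_AB deg_le_lin_nf] by (simp add: ABC)
  show "normal_form (?AB \<otimes>\<^bsub>W\<^esub> lin d \<gamma> 1) [d, e, d] = 1"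
    unfolding ABC using act_top_coeff[OF fin deg_AB deg_le_lin_nf, of "[d, e, d]"] assms AB_de
    by (simp add: lin_nf_single numeral_2_eq_2)
qed

text \<open>The hypotheses say \<open>relpoly d = (t - r)(t - s)\<close>.\<close>

lemma factor_mult_lin:
  assumes "c0 d = r * s" "c1 d = - r - s"
  shows "lin d (- s) 1 \<otimes>\<^bsub>W\<^esub> lin d \<alpha> \<beta> = scalar (\<alpha> + r * \<beta>) \<otimes>\<^bsub>W\<^esub> lin d (- s) 1"
  unfolding lin_const[of d, symmetric] lin_mult assms
  by (intro arg_cong2[where f = "lin d"]) (simp_all add: algebra_simps)

lemma root_square_zero:
  fixes e :: bool
  assumes c: "c0 d = r * s" "c1 d = - r - s"
  defines "z \<equiv> lin d (- r) 1 \<otimes>\<^bsub>W\<^esub> lin e 0 1 \<otimes>\<^bsub>W\<^esub> lin d (- s) 1"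
  shows "z \<otimes>\<^bsub>W\<^esub> z = \<zero>\<^bsub>W\<^esub>"
    and "z \<otimes>\<^bsub>W\<^esub> lin d \<alpha> \<beta> = scalar (\<alpha> + r * \<beta>) \<otimes>\<^bsub>W\<^esub> z"
proof -
  interpret R: ring W by (rule ring_W)
  let ?A = "lin d (- r) 1 \<otimes>\<^bsub>W\<^esub> lin e 0 1" and ?C = "lin d (- s) 1"
  have "?C \<otimes>\<^bsub>W\<^esub> lin d (- r) 1 = \<zero>\<^bsub>W\<^esub>"
    using factor_mult_lin[OF c, of "- r" 1] by (simp add: scalar_def lin_zero)
  then have "?A \<otimes>\<^bsub>W\<^esub> ((?C \<otimes>\<^bsub>W\<^esub> lin d (- r) 1) \<otimes>\<^bsub>W\<^esub> (lin e 0 1 \<otimes>\<^bsub>W\<^esub> ?C)) = \<zero>\<^bsub>W\<^esub>" by simp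
  then show "z \<otimes>\<^bsub>W\<^esub> z = \<zero>\<^bsub>W\<^esub>" by (simp add: z_def R.m_assoc)
  have "z \<otimes>\<^bsub>W\<^esub> lin d \<alpha> \<beta> = ?A \<otimes>\<^bsub>W\<^esub> (scalar (\<alpha> + r * \<beta>) \<otimes>\<^bsub>W\<^esub> ?C)"
    by (simp add: z_def R.m_assoc factor_mult_lin[OF c])
  also have "\<dots> = scalar (\<alpha> + r * \<beta>) \<otimes>\<^bsub>W\<^esub> z"
    using scalar_commute[of ?A "\<alpha> + r * \<beta>"] by (simp add: z_def R.m_assoc[symmetric])
  finally show "z \<otimes>\<^bsub>W\<^esub> lin d \<alpha> \<beta> = scalar (\<alpha> + r * \<beta>) \<otimes>\<^bsub>W\<^esub> z" .
qed

text \<open>For a root \<open>r\<close> of \<open>relpoly d\<close> with cofactor \<open>t - s\<close> and \<open>e\<close> the other letter,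
  \<open>z = (d - r) e (d - s)\<close> squares to zero. The unit \<open>1 + z\<close> has leading word \<open>d e d\<close>, so if
  it were generated, some unit \<open>k \<in> \<bbbF>[d]\<close> would make \<open>(1 + z) k = k + z k\<close> of degree 2;
  but \<open>z k\<close> is the multiple of \<open>z\<close> by a scalar that vanishes only if \<open>(d - s) k = 0\<close>.\<close>

lemma not_generate_if_root:
  assumes root: "poly (relpoly d) r = 0"
  shows "generate (units_of W) (basic_units p q) \<noteq> Units W"
proof
  assume gen: "generate (units_of W) (basic_units p q) = Units W"
  interpret R: ring W by (rule ring_W)
  define s where "s = - c1 d - r"
  have c: "c0 d = r * s" "c1 d = - r - s"
    using root by (simp_all add: s_def poly_relpoly algebra_simps eq_neg_iff_add_eq_0)
  define e where "e = (\<not> d)"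
  define z where "z = lin d (- r) 1 \<otimes>\<^bsub>W\<^esub> lin e 0 1 \<otimes>\<^bsub>W\<^esub> lin d (- s) 1"
  have zc: "z \<in> carrier W" by (simp add: z_def)
  have "\<one>\<^bsub>W\<^esub> \<oplus>\<^bsub>W\<^esub> z \<in> Units W"
    using root_square_zero(1)[OF c] by (intro R.one_add_nilpotent_Units zc) (simp add: z_def)
  then have red: "has_reduced_form (\<one>\<^bsub>W\<^esub> \<oplus>\<^bsub>W\<^esub> z)" using gen by (simp add: has_reduced_form_if_generated)
  have nf_z: "deg_le 3 (normal_form z)" "normal_form z [d, e, d] = 1"
    using normal_form_three_letters[of e d] by (simp_all add: z_def e_def)
  have nf_X: "normal_form (\<one>\<^bsub>W\<^esub> \<oplus>\<^bsub>W\<^esub> z) = (\<lambda>v. word_basis [] v + normal_form z v)"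
    by (simp add: normal_form_add zc normal_form_one)
  have "deg_le 3 (normal_form (\<one>\<^bsub>W\<^esub> \<oplus>\<^bsub>W\<^esub> z))"
    using nf_z(1) by (auto simp: nf_X deg_le_def word_basis_def)
  moreover have "alternating ([d, e] @ [d])" "length ([d, e] @ [d]) = 3"
    "normal_form (\<one>\<^bsub>W\<^esub> \<oplus>\<^bsub>W\<^esub> z) ([d, e] @ [d]) \<noteq> 0"
    using nf_z(2) by (simp_all add: e_def nf_X word_basis_def)
  ultimately obtain \<alpha> \<beta> where k: "lin d \<alpha> \<beta> \<in> Units W"
    and deg2: "deg_le (3 - 1) (normal_form ((\<one>\<^bsub>W\<^esub> \<oplus>\<^bsub>W\<^esub> z) \<otimes>\<^bsub>W\<^esub> lin d \<alpha> \<beta>))"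
    by (rule reduced_form_cancel_last_factor[OF red])
  have "(\<one>\<^bsub>W\<^esub> \<oplus>\<^bsub>W\<^esub> z) \<otimes>\<^bsub>W\<^esub> lin d \<alpha> \<beta> = lin d \<alpha> \<beta> \<oplus>\<^bsub>W\<^esub> scalar (\<alpha> + r * \<beta>) \<otimes>\<^bsub>W\<^esub> z"
    using root_square_zero(2)[OF c] by (simp add: R.l_distr zc z_def)
  with deg2 have "normal_form (lin d \<alpha> \<beta> \<oplus>\<^bsub>W\<^esub> scalar (\<alpha> + r * \<beta>) \<otimes>\<^bsub>W\<^esub> z) [d, e, d] = 0"
    by (simp add: deg_le_def)
  then have "\<alpha> = - r * \<beta>"
    using nf_z(2) zc by (simp add: normal_form_add normal_form_scalar_mult normal_form_lin lin_nf_def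
        eq_neg_iff_add_eq_0)
  then have "lin d \<alpha> \<beta> \<otimes>\<^bsub>W\<^esub> lin d (- s) 1 = \<zero>\<^bsub>W\<^esub>"
    using factor_mult_lin[OF c, of \<alpha> \<beta>] by (simp add: lin_mult_commute scalar_def lin_zero)
  then have "lin d (- s) 1 = \<zero>\<^bsub>W\<^esub>"
    using k by (metis R.Units_l_inv R.Units_inv_closed R.l_one R.m_assoc R.r_null R.Units_closed lin_in_carrier)
  then show False by (simp add: lin_eq_zero_iff)
qed

end

theorem mainTheorem3:
  fixes p q :: "'a::field poly"
  assumes "degree p = 2" and "lead_coeff p = 1"
      and "degree q = 2" and "lead_coeff q = 1"
  shows "generate (units_of (W_alg p q)) (basic_units p q) = Units (W_alg p q)
         \<longleftrightarrow> Factorial_Ring.irreducible p \<and> Factorial_Ring.irreducible q"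
proof -
  interpret quadratic_relations p q by unfold_locales (rule assms)+
  have irreducible_iff: "Factorial_Ring.irreducible p \<and> Factorial_Ring.irreducible q
      \<longleftrightarrow> (\<forall>c r. poly (relpoly c) r \<noteq> 0)"
    using irreducible_degree_2_iff_no_roots[OF assms(1)] irreducible_degree_2_iff_no_roots[OF assms(3)]
    by (auto simp: relpoly_def all_bool_eq)
  show ?thesis
    using irreducible_iff not_generate_if_root Units_subset_generate_if_no_roots
      generate_basic_units_subset_Units by blast
qed

end
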